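(* Let $C_1\ge 0$, $C_2\ge 0$ with $C_1+C_2=1$, and let $0<\alpha_2<\alpha_1<1$. Let $Y_{\alpha_1,\alpha_2}$ be the inverse mixed stable subordinator with these parameters. Then $$\operatorname{Var}\big(Y_{\alpha_1,\alpha_2}(t)\big)\sim \frac{t^{2\alpha_2}}{C_2^2}\left(\frac{2}{\Gamma(2\alpha_2+1)}-\frac{1}{(\Gamma(\alpha_2+1))^2}\right),\qquad t\to\infty.$$
   Context: The mixed stable subordinator $L_{\alpha_1,\alpha_2}=\{L_{\alpha_1,\alpha_2}(t)\}_{t\ge0}$ is the subordinator (Lévy process with non-decreasing paths) with $\mathbb{E}\,e^{-uL_{\alpha_1,\alpha_2}(t)}=e^{-t(C_1u^{\alpha_1}+C_2u^{\alpha_2})}$ for $u\ge0$; equivalently $L_{\alpha_1,\alpha_2}(t)\overset{d}{=}C_1^{1/\alpha_1}L_{\alpha_1}(t)+C_2^{1/\alpha_2}L_{\alpha_2}(t)$ with $L_{\alpha_1},L_{\alpha_2}$ independent stable subordinators (Laplace exponents $u^{\alpha_1}$, $u^{\alpha_2}$). The inverse mixed stable subordinator is $Y_{\alpha_1,\alpha_2}(t)=\inf\{u\ge0: L_{\alpha_1,\alpha_2}(u)>t\}$, $t\ge0$. The notation $f(t)\sim g(t)$ means $f(t)/g(t)\to1$. *)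

theory Defs
  imports "HOL-Probability.Probability" "HOL-Library.Landau_Symbols"
begin

definition mixed_laplace_exponent :: "real \<Rightarrow> real \<Rightarrow> real \<Rightarrow> real \<Rightarrow> real \<Rightarrow> real" where
  "mixed_laplace_exponent C1 C2 a1 a2 u = C1 * u powr a1 + C2 * u powr a2"

text \<open>L is (a version of) the mixed stable subordinator on the probability space M:
  a process with L(0)=0, non-decreasing paths, independent increments, and
  E exp(-u (L t - L s)) = exp(-(t-s)(C1 u^a1 + C2 u^a2)) for 0 <= s <= t, u >= 0.
  These determine all finite-dimensional distributions of L.\<close>
definition mixed_stable_subordinator ::
  "'a measure \<Rightarrow> real \<Rightarrow> real \<Rightarrow> real \<Rightarrow> real \<Rightarrow> (real \<Rightarrow> 'a \<Rightarrow> real) \<Rightarrow> bool" where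
  "mixed_stable_subordinator M C1 C2 a1 a2 L \<longleftrightarrow>
     prob_space M \<and>
     (\<forall>t\<ge>0. L t \<in> borel_measurable M) \<and>
     (\<forall>\<omega>\<in>space M. L 0 \<omega> = 0) \<and>
     (\<forall>\<omega>\<in>space M. mono_on {0..} (\<lambda>t. L t \<omega>)) \<and>
     (\<forall>(n::nat) (t::nat \<Rightarrow> real). 0 \<le> t 0 \<and> (\<forall>i<n. t i < t (Suc i)) \<longrightarrow>
        prob_space.indep_vars M (\<lambda>_. borel) (\<lambda>i \<omega>. L (t (Suc i)) \<omega> - L (t i) \<omega>) {..<n}) \<and>
     (\<forall>s t u. 0 \<le> s \<and> s \<le> t \<and> 0 \<le> u \<longrightarrow>
        prob_space.expectation M (\<lambda>\<omega>. exp (- u * (L t \<omega> - L s \<omega>)))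
          = exp (- (t - s) * mixed_laplace_exponent C1 C2 a1 a2 u))"

definition inverse_subordinator :: "(real \<Rightarrow> 'a \<Rightarrow> real) \<Rightarrow> real \<Rightarrow> 'a \<Rightarrow> real" where
  "inverse_subordinator L t \<omega> = Inf {u. 0 \<le> u \<and> L u \<omega> > t}"

end

theory Submission
  imports Defs
begin

(*
  Write M_k(t) = E Y(t)^k.  Since Y(t) > x holds when L(x + eta) <= t and implies L(x) <= t,
  Fubini's theorem computes the Laplace transform of the nondecreasing function M_k:
  integral_0^oo exp(-s t) M_k(t) dt = k! / (s phi(s)^k), where phi is the Laplace exponent of L.
  For phi(s) = C1 s^a1 + C2 s^a2 with a2 < a1 we have phi(s) ~ C2 s^a2 as s -> 0, so Karamata's
  Tauberian theorem gives M_k(t) ~ k! t^(k a2) / (C2^k Gamma(1 + k a2)), and Var Y(t) = M_2 - M_1^2.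
  The resulting leading coefficient is positive because Gamma(2a + 1) < 2 Gamma(a + 1)^2 for
  0 < a < 1, which follows from a lower bound for the Beta integral B(a + 1, a + 1).

  Karamata's theorem for a nondecreasing m with integral_0^oo exp(-s t) m(t) dt ~ c s^(-1-rho) is
  proved by testing against kernels f(t/T): for f(u) = exp(-k u) the limit is the hypothesis, by
  Stone-Weierstrass in the variable exp(-u) it extends to continuous bumps, and bumps supported
  near 1 squeeze m(T) / T^rho between c/Gamma(1+rho) (1 -+ delta)^rho.
*)

section \<open>Gamma function estimates\<close>

lemma Beta_diagonal_lower_bound:
  fixes a :: real
  assumes "0 < a" "a \<le> 1"
  shows "4 powr (1 - a) / 6 \<le> Beta (a + 1) (a + 1)"
proof -
  define k where "k = (4::real) powr (1 - a)"
  have "Gamma (2::real) = 1" "Gamma (4::real) = 6"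
    using Gamma_fact[of 1] Gamma_fact[of 3] by (simp_all add: fact_numeral)
  then have Beta_2_2: "Beta 2 2 = (1::real) / 6"
    by (simp add: Beta_def)
  have "k * Beta 2 2 \<le> Beta (a + 1) (a + 1)"
  proof (rule has_integral_le)
    show "((\<lambda>t. k * (t powr (2 - 1) * (1 - t) powr (2 - 1))) has_integral k * Beta 2 2) {0..1}"
      by (intro has_integral_mult_right has_integral_Beta_real) auto
    show "((\<lambda>t. t powr (a + 1 - 1) * (1 - t) powr (a + 1 - 1)) has_integral Beta (a + 1) (a + 1)) {0..1}"
      using assms by (intro has_integral_Beta_real) auto
    fix t :: real
    assume t: "t \<in> {0..1}"
    define y where "y = t * (1 - t)"
    have "0 \<le> (t - 1/2)\<^sup>2" by simp
    then have y: "0 \<le> y" "y \<le> 1/4"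
      using t by (simp_all add: y_def power2_eq_square algebra_simps mult_left_le)
    have "k * y \<le> y powr a"
    proof (cases "y = 0")
      case False
      have "k = (1/4) powr (a - 1)"
        by (simp add: k_def powr_divide powr_diff)
      also have "\<dots> \<le> y powr (a - 1)"
        using y False assms by (intro powr_mono2') auto
      finally have "k * y \<le> y powr (a - 1) * y"
        using y by (intro mult_right_mono) auto
      then show ?thesis
        using y False by (simp add: powr_diff)
    qed simp
    then show "k * (t powr (2 - 1) * (1 - t) powr (2 - 1)) \<le> t powr (a + 1 - 1) * (1 - t) powr (a + 1 - 1)"
      using t by (simp add: y_def powr_mult)
  qed
  then show ?thesis
    by (simp add: k_def Beta_2_2)
qed

lemma reciprocal_Gamma_sq_less:
  fixes a :: real
  assumes "0 < a" "a < 1"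
  shows "1 / (Gamma (a + 1))\<^sup>2 < 2 / Gamma (2 * a + 1)"
proof -
  define p where "p = (4::real) powr (a - 1)"
  have "exp ((1 - a) * - ln 4 + a * 0) \<le> (1 - a) * exp (- ln 4) + a * exp 0"
    using convex_onD[OF exp_convex, of a "- ln 4" 0] assms by simp
  then have "p \<le> (1 - a) / 4 + a"
    by (simp add: p_def powr_def exp_minus algebra_simps)
  then have "3 * p < 2 * a + 1"
    using assms by (simp add: field_simps)
  moreover have "0 < p"
    by (simp add: p_def)
  moreover have "4 powr (1 - a) = 1 / p"
    by (simp add: p_def powr_minus_divide[symmetric])
  ultimately have "1 / 2 < (2 * a + 1) * (4 powr (1 - a) / 6)"
    by (simp only:) (simp add: field_simps)
  also have "\<dots> \<le> (2 * a + 1) * Beta (a + 1) (a + 1)"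
    using Beta_diagonal_lower_bound[of a] assms by (intro mult_left_mono) auto
  also have "\<dots> = (Gamma (a + 1))\<^sup>2 / Gamma (2 * a + 1)"
  proof -
    have "Gamma (a + 1 + (a + 1)) = (2 * a + 1) * Gamma (2 * a + 1)"
      using Gamma_plus1[of "2 * a + 1"] nonpos_Ints_nonpos[of "2 * a + 1"] assms
      by (auto simp: algebra_simps)
    then show ?thesis
      using assms by (simp add: Beta_def power2_eq_square)
  qed
  finally have "1 / 2 < (Gamma (a + 1))\<^sup>2 / Gamma (2 * a + 1)" .
  moreover have "0 < Gamma (2 * a + 1)" "0 < Gamma (a + 1)"
    using assms by (auto intro!: Gamma_real_pos)
  ultimately show ?thesis
    by (simp add: field_simps)
qed

lemma has_bochner_integral_exp_powr:
  fixes k r :: real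
  assumes k: "0 < k" and r: "-1 < r"
  shows "has_bochner_integral lborel (\<lambda>u. indicator {0..} u * exp (- (k * u)) * u powr r)
           (Gamma (1 + r) / k powr (1 + r))"
proof -
  define f where "f u = indicator {0..} u * exp (- u) * u powr r" for u :: real
  have [measurable]: "f \<in> borel_measurable borel"
    unfolding f_def by measurable
  have "((\<lambda>u. u powr (1 + r - 1) / exp u) has_integral Gamma (1 + r)) {0..}"
    using r by (intro Gamma_integral_real) auto
  then have "(\<integral>\<^sup>+u. ennreal (u powr (1 + r - 1) / exp u) * indicator {0..} u \<partial>lborel) = ennreal (Gamma (1 + r))"
    by (intro nn_integral_has_integral_lebesgue') auto
  moreover have "(\<integral>\<^sup>+u. ennreal (u powr (1 + r - 1) / exp u) * indicator {0..} u \<partial>lborel)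
      = (\<integral>\<^sup>+u. ennreal (f u) \<partial>lborel)"
    by (intro nn_integral_cong) (auto simp: f_def indicator_def exp_minus field_simps)
  ultimately have "has_bochner_integral lborel f (Gamma (1 + r))"
    using r by (intro has_bochner_integral_nn_integral)
      (auto simp: f_def intro!: Gamma_real_pos less_imp_le)
  then have "has_bochner_integral lborel (\<lambda>u. f (0 + k * u)) (Gamma (1 + r) / k)"
    using k by (subst (asm) lborel_has_bochner_integral_real_affine_iff[of k _ _ 0])
      (auto simp: divide_inverse_commute)
  then have "has_bochner_integral lborel (\<lambda>u. f (0 + k * u) / k powr r) (Gamma (1 + r) / k / k powr r)"
    by (rule has_bochner_integral_divide_zero)
  moreover have "f (0 + k * u) / k powr r = indicator {0..} u * exp (- (k * u)) * u powr r" for u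
    using k by (auto simp: f_def indicator_def powr_mult zero_le_mult_iff)
  ultimately show ?thesis
    using k by (simp add: powr_add field_simps)
qed

section \<open>Karamata's Tauberian theorem\<close>

lemma bump_function_exists:
  fixes a b :: real
  assumes "a < b"
  obtains w :: "real \<Rightarrow> real"
  where "continuous_on UNIV w" "\<And>u. 0 \<le> w u" "\<And>u. w u \<noteq> 0 \<Longrightarrow> a < u \<and> u < b"
    "integrable lborel w" "0 < integral\<^sup>L lborel w"
proof
  define p q where "p = (a + b) / 2" and "q = (b - a) / 2"
  have q: "0 < q" using assms by (simp add: q_def)
  define w where "w u = max 0 (q - \<bar>u - p\<bar>)" for u
  show cont: "continuous_on UNIV w"
    unfolding w_def by (intro continuous_intros)
  show "0 \<le> w u" for u
    by (simp add: w_def)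
  show window: "a < u \<and> u < b" if "w u \<noteq> 0" for u
    using that by (auto simp: w_def p_def q_def max_def abs_if field_simps split: if_splits)
  have "integrable lborel (\<lambda>u. indicator {a..b} u *\<^sub>R w u)"
    by (intro borel_integrable_compact continuous_on_subset[OF cont]) auto
  moreover have "indicator {a..b} u *\<^sub>R w u = w u" for u
    using window[of u] by (cases "w u = 0") auto
  ultimately show int: "integrable lborel w"
    by (metis (no_types, lifting) Bochner_Integration.integrable_cong)
  have "0 < q / 2 * q"
    using q by simp
  also have "\<dots> = (\<integral>u. q / 2 * indicator {p - q/2..p + q/2} u \<partial>lborel)"
    using q by simp
  also have "\<dots> \<le> integral\<^sup>L lborel w"
    using q by (intro integral_mono int integrable_mult_right integrable_real_indicator)
      (auto simp: emeasure_lborel_Icc_eq indicator_def w_def abs_if)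
  finally show "0 < integral\<^sup>L lborel w" .
qed

lemma exp_dominated_if_bounded_support:
  fixes w :: "real \<Rightarrow> real" and b :: real
  assumes cont: "continuous_on UNIV w" and supp: "\<And>u. b \<le> u \<Longrightarrow> w u = 0"
  obtains B where "\<And>u. 0 \<le> u \<Longrightarrow> \<bar>w u\<bar> \<le> B * exp (- u)"
proof -
  have "bounded (w ` {0..b})"
    by (intro compact_imp_bounded compact_continuous_image continuous_on_subset[OF cont]) auto
  then obtain B0 where B0: "\<And>u. u \<in> {0..b} \<Longrightarrow> \<bar>w u\<bar> \<le> B0"
    unfolding bounded_iff by (metis image_eqI real_norm_def)
  have "\<bar>w u\<bar> \<le> max B0 0 * exp b * exp (- u)" if u: "0 \<le> u" for u
  proof (cases "u < b")
    case True
    have "\<bar>w u\<bar> \<le> max B0 0 * 1"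
      using B0[of u] u True by auto
    also have "\<dots> \<le> max B0 0 * exp (b - u)"
      using True by (intro mult_left_mono) auto
    finally show ?thesis
      by (simp add: exp_diff exp_minus field_simps)
  qed (simp add: supp)
  then show ?thesis
    using that by blast
qed

lemma continuous_on_exp_substitution:
  fixes w :: "real \<Rightarrow> real"
  assumes cont: "continuous_on UNIV w" and supp: "\<And>u. b \<le> u \<Longrightarrow> w u = 0"
  shows "continuous_on {0..1} (\<lambda>x. if x \<le> 0 then 0 else w (- ln x) / x)" (is "continuous_on _ ?h")
proof -
  define x0 where "x0 = exp (- max b 0)"
  have x0: "0 < x0" "x0 \<le> 1"
    by (auto simp: x0_def)
  have "continuous_on ({0..x0} \<union> {x0..1}) ?h"
  proof (rule continuous_on_closed_Un)
    show "continuous_on {0..x0} ?h"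
    proof (rule continuous_on_eq[OF continuous_on_const[of _ 0]])
      fix x
      assume x: "x \<in> {0..x0}"
      show "0 = ?h x"
      proof (cases "x \<le> 0")
        case False
        then have "ln x \<le> - max b 0"
          using x ln_le_cancel_iff[of x x0] by (simp add: x0_def)
        then show ?thesis
          using False supp by simp
      qed simp
    qed
    show "continuous_on {x0..1} ?h"
    proof (rule continuous_on_eq)
      show "continuous_on {x0..1} (\<lambda>x. w (- ln x) / x)"
        using x0 by (intro continuous_intros continuous_on_compose2[OF cont]) auto
    qed (use x0 in auto)
  qed auto
  then show ?thesis
    using x0 ivl_disj_un_two_touch(4)[of 0 x0 1] by simp
qed

lemma exp_polynomial_approximation:
  fixes w :: "real \<Rightarrow> real" and b \<eta> :: real
  assumes cont: "continuous_on UNIV w" and supp: "\<And>u. b \<le> u \<Longrightarrow> w u = 0" and \<eta>: "0 < \<eta>"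
  obtains a :: "nat \<Rightarrow> real" and n :: nat
  where "\<And>u. 0 \<le> u \<Longrightarrow> \<bar>w u - (\<Sum>i\<le>n. a i * exp (- (real (Suc i) * u)))\<bar> \<le> \<eta> * exp (- u)"
proof -
  \<comment> \<open>Substituting \<open>x = exp (- u)\<close> turns exponential polynomials into polynomials on \<open>{0..1}\<close>.\<close>
  define h where "h x = (if x \<le> 0 then 0 else w (- ln x) / x)" for x :: real
  obtain g where g: "real_polynomial_function g" "\<And>x. x \<in> {0..1} \<Longrightarrow> \<bar>h x - g x\<bar> < \<eta>"
    using Stone_Weierstrass_real_polynomial_function[OF compact_Icc _ \<eta>]
      continuous_on_exp_substitution[OF cont supp] unfolding h_def by blast
  obtain a n where g_eq: "g = (\<lambda>x. \<Sum>i\<le>n. a i * x ^ i)"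
    using g(1) real_polynomial_function_iff_sum by blast
  show ?thesis
  proof
    fix u :: real
    assume u: "0 \<le> u"
    define x where "x = exp (- u)"
    have x: "0 < x" "x \<le> 1"
      using u by (auto simp: x_def)
    have "exp (- (real (Suc i) * u)) = x * x ^ i" for i
      using exp_of_nat_mult[of "Suc i" "- u"] by (simp add: x_def)
    then have "\<bar>w u - (\<Sum>i\<le>n. a i * exp (- (real (Suc i) * u)))\<bar> = x * \<bar>h x - g x\<bar>"
      using x by (simp add: g_eq h_def x_def sum_distrib_left abs_mult field_simps mult_ac)
    also have "\<dots> \<le> x * \<eta>"
      using g(2)[of x] x by (intro mult_left_mono) auto
    finally show "\<bar>w u - (\<Sum>i\<le>n. a i * exp (- (real (Suc i) * u)))\<bar> \<le> \<eta> * exp (- u)"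
      by (simp add: x_def mult_ac)
  qed
qed

lemma has_bochner_integral_rescale:
  fixes w :: "real \<Rightarrow> real"
  assumes "has_bochner_integral lborel w W" and "0 < T"
  shows "has_bochner_integral lborel (\<lambda>t. w (t / T)) (T * W)"
  using assms lborel_has_bochner_integral_real_affine_iff[of "1 / T" w W 0] by (simp add: mult.commute)

locale karamata_tauberian =
  fixes m G :: "real \<Rightarrow> real" and \<rho> c :: real
  assumes mono: "mono m" and nonneg: "\<And>t. 0 \<le> m t"
    and laplace: "\<And>s. 0 < s \<Longrightarrow>
      has_bochner_integral lborel (\<lambda>t. indicator {0..} t * exp (- (s * t)) * m t) (G s)"
    and laplace_asymp: "((\<lambda>s. s powr (1 + \<rho>) * G s) \<longlongrightarrow> c) (at_right 0)"
    and rho: "0 \<le> \<rho>"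
begin

lemma borel_measurable_m [measurable]: "m \<in> borel_measurable borel"
  by (rule borel_measurable_mono[OF mono])

lemma Gamma_pos: "0 < Gamma (1 + \<rho>)"
  using rho by (intro Gamma_real_pos) auto

lemma c_nonneg: "0 \<le> c"
proof (rule tendsto_lowerbound[OF laplace_asymp])
  have "0 \<le> G s" if "0 < s" for s
  proof -
    have "G s = (\<integral>t. indicator {0..} t * exp (- (s * t)) * m t \<partial>lborel)"
      using laplace[OF that] by (simp add: has_bochner_integral_integral_eq)
    also have "\<dots> \<ge> 0"
      using nonneg by (auto intro!: integral_nonneg_AE)
    finally show ?thesis .
  qed
  then show "\<forall>\<^sub>F s in at_right 0. 0 \<le> s powr (1 + \<rho>) * G s"
    by (auto simp: eventually_at_right_field intro: exI[of _ 1])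
qed simp

definition scaled_integral :: "(real \<Rightarrow> real) \<Rightarrow> real \<Rightarrow> real" where
  "scaled_integral f T = (\<integral>t. indicator {0..} t * f (t / T) * m t \<partial>lborel) / T powr (1 + \<rho>)"

definition limit_integral :: "(real \<Rightarrow> real) \<Rightarrow> real" where
  "limit_integral f = c / Gamma (1 + \<rho>) * (\<integral>u. indicator {0..} u * f u * u powr \<rho> \<partial>lborel)"

lemma scaled_integral_eqI:
  "has_bochner_integral lborel (\<lambda>t. indicator {0..} t * f (t / T) * m t) I \<Longrightarrow>
    scaled_integral f T = I / T powr (1 + \<rho>)"
  by (simp add: scaled_integral_def has_bochner_integral_integral_eq)

lemma limit_integral_eqI:
  "has_bochner_integral lborel (\<lambda>u. indicator {0..} u * f u * u powr \<rho>) I \<Longrightarrow>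
    limit_integral f = c / Gamma (1 + \<rho>) * I"
  by (simp add: limit_integral_def has_bochner_integral_integral_eq)

lemma has_bochner_integral_scaled_exp:
  assumes "0 < k" "0 < T"
  shows "has_bochner_integral lborel (\<lambda>t. indicator {0..} t * exp (- (k * (t / T))) * m t) (G (k / T))"
  using laplace[of "k / T"] assms by simp

lemma has_bochner_integral_limit_exp:
  assumes "0 < k"
  shows "has_bochner_integral lborel (\<lambda>u. indicator {0..} u * exp (- (k * u)) * u powr \<rho>)
           (Gamma (1 + \<rho>) / k powr (1 + \<rho>))"
  using has_bochner_integral_exp_powr[OF assms, of \<rho>] rho by simp

lemma scaled_integral_exp_tendsto:
  assumes k: "0 < k"
  shows "((\<lambda>T. scaled_integral (\<lambda>u. exp (- (k * u))) T) \<longlongrightarrow> c / k powr (1 + \<rho>)) at_top"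
proof -
  have "filterlim (\<lambda>T. k / T) (at_right 0) at_top"
    unfolding filterlim_at
  proof
    show "\<forall>\<^sub>F T in at_top. k / T \<in> {0<..} \<and> k / T \<noteq> 0"
      using eventually_gt_at_top[of 0] by eventually_elim (use k in auto)
    show "((\<lambda>T. k / T) \<longlongrightarrow> 0) at_top"
      by (intro tendsto_divide_0[OF tendsto_const] filterlim_at_top_imp_at_infinity filterlim_ident)
  qed
  then have "((\<lambda>T. (k / T) powr (1 + \<rho>) * G (k / T) / k powr (1 + \<rho>)) \<longlongrightarrow> c / k powr (1 + \<rho>)) at_top"
    by (intro tendsto_divide tendsto_const filterlim_compose[OF laplace_asymp]) (use k in auto)
  moreover have "\<forall>\<^sub>F T in at_top.
      (k / T) powr (1 + \<rho>) * G (k / T) / k powr (1 + \<rho>) = scaled_integral (\<lambda>u. exp (- (k * u))) T"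
    using eventually_gt_at_top[of 0]
    by eventually_elim
      (use k in \<open>simp add: scaled_integral_eqI[OF has_bochner_integral_scaled_exp] powr_divide\<close>)
  ultimately show ?thesis
    by (rule Lim_transform_eventually)
qed

lemma scaled_integral_exp_poly_tendsto:
  fixes a :: "nat \<Rightarrow> real" and n :: nat
  defines "K \<equiv> \<lambda>u. \<Sum>i\<le>n. a i * exp (- (real (Suc i) * u))"
  shows "((\<lambda>T. scaled_integral K T) \<longlongrightarrow> limit_integral K) at_top"
proof -
  have "(\<lambda>u. indicator {0..} u * K u * u powr \<rho>)
      = (\<lambda>u. \<Sum>i\<le>n. a i * (indicator {0..} u * exp (- (real (Suc i) * u)) * u powr \<rho>))"
    by (simp add: K_def fun_eq_iff sum_distrib_left sum_distrib_right mult_ac)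
  then have "has_bochner_integral lborel (\<lambda>u. indicator {0..} u * K u * u powr \<rho>)
      (\<Sum>i\<le>n. a i * (Gamma (1 + \<rho>) / real (Suc i) powr (1 + \<rho>)))"
    by (simp only:)
      (intro has_bochner_integral_sum has_bochner_integral_mult_right has_bochner_integral_limit_exp, simp)
  then have limit: "limit_integral K = (\<Sum>i\<le>n. a i * (c / real (Suc i) powr (1 + \<rho>)))"
    using Gamma_pos by (simp add: limit_integral_eqI sum_distrib_left mult_ac)
  have "((\<lambda>T. \<Sum>i\<le>n. a i * scaled_integral (\<lambda>u. exp (- (real (Suc i) * u))) T)
      \<longlongrightarrow> (\<Sum>i\<le>n. a i * (c / real (Suc i) powr (1 + \<rho>)))) at_top"
    by (intro tendsto_sum tendsto_mult_left scaled_integral_exp_tendsto) simp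
  moreover have "\<forall>\<^sub>F T in at_top.
      (\<Sum>i\<le>n. a i * scaled_integral (\<lambda>u. exp (- (real (Suc i) * u))) T) = scaled_integral K T"
    using eventually_gt_at_top[of 0]
  proof eventually_elim
    case (elim T)
    have "(\<lambda>t. indicator {0..} t * K (t / T) * m t)
        = (\<lambda>t. \<Sum>i\<le>n. a i * (indicator {0..} t * exp (- (real (Suc i) * (t / T))) * m t))"
      by (simp add: K_def fun_eq_iff sum_distrib_left sum_distrib_right mult_ac)
    then have "has_bochner_integral lborel (\<lambda>t. indicator {0..} t * K (t / T) * m t)
        (\<Sum>i\<le>n. a i * G (real (Suc i) / T))"
      using elim by (simp only:)
        (intro has_bochner_integral_sum has_bochner_integral_mult_right has_bochner_integral_scaled_exp, simp_all)
    then have "scaled_integral K T = (\<Sum>i\<le>n. a i * G (real (Suc i) / T)) / T powr (1 + \<rho>)"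
      by (rule scaled_integral_eqI)
    then show ?case
      using elim by (simp add: scaled_integral_eqI[OF has_bochner_integral_scaled_exp] sum_divide_distrib)
  qed
  ultimately show ?thesis
    unfolding limit by (rule Lim_transform_eventually)
qed

lemma scaled_integral_exp_dominated:
  assumes f [measurable]: "f \<in> borel_measurable borel"
    and B: "\<And>u. 0 \<le> u \<Longrightarrow> \<bar>f u\<bar> \<le> B * exp (- u)" and T: "0 < T"
  shows "integrable lborel (\<lambda>t. indicator {0..} t * f (t / T) * m t)"
    and "\<bar>scaled_integral f T\<bar> \<le> B * scaled_integral (\<lambda>u. exp (- u)) T"
proof -
  have major: "has_bochner_integral lborel
      (\<lambda>t. B * (indicator {0..} t * exp (- (1 * (t / T))) * m t)) (B * G (1 / T))"
    using T by (intro has_bochner_integral_mult_right has_bochner_integral_scaled_exp) auto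
  have bound: "\<bar>indicator {0..} t * f (t / T) * m t\<bar> \<le> B * (indicator {0..} t * exp (- (1 * (t / T))) * m t)"
    for t
  proof (cases "0 \<le> t")
    case True
    then have "\<bar>f (t / T)\<bar> * m t \<le> B * exp (- (t / T)) * m t"
      using B[of "t / T"] T nonneg by (intro mult_right_mono) auto
    then show ?thesis
      using True nonneg by (simp add: abs_mult mult_ac)
  qed simp
  show int: "integrable lborel (\<lambda>t. indicator {0..} t * f (t / T) * m t)"
  proof (rule Bochner_Integration.integrable_bound)
    show "integrable lborel (\<lambda>t. B * (indicator {0..} t * exp (- (1 * (t / T))) * m t))"
      using major by (simp add: has_bochner_integral_iff)
    show "AE t in lborel. norm (indicator {0..} t * f (t / T) * m t)
        \<le> norm (B * (indicator {0..} t * exp (- (1 * (t / T))) * m t))"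
      by (intro AE_I2) (metis bound abs_ge_self order_trans real_norm_def)
  qed measurable
  have "\<bar>\<integral>t. indicator {0..} t * f (t / T) * m t \<partial>lborel\<bar> \<le> B * G (1 / T)"
    using integral_abs_bound_integral[OF int integrable.intros[OF major] bound]
    by (simp only: has_bochner_integral_integral_eq[OF major])
  then show "\<bar>scaled_integral f T\<bar> \<le> B * scaled_integral (\<lambda>u. exp (- u)) T"
    using T scaled_integral_eqI[OF has_bochner_integral_scaled_exp[of 1 T]]
    by (simp add: scaled_integral_def abs_divide divide_right_mono)
qed

lemma limit_integral_exp_dominated:
  assumes f [measurable]: "f \<in> borel_measurable borel"
    and B: "\<And>u. 0 \<le> u \<Longrightarrow> \<bar>f u\<bar> \<le> B * exp (- u)"
  shows "integrable lborel (\<lambda>u. indicator {0..} u * f u * u powr \<rho>)"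
    and "\<bar>limit_integral f\<bar> \<le> B * c"
proof -
  have major: "has_bochner_integral lborel
      (\<lambda>u. B * (indicator {0..} u * exp (- (1 * u)) * u powr \<rho>)) (B * Gamma (1 + \<rho>))"
    using has_bochner_integral_limit_exp[of 1] by (intro has_bochner_integral_mult_right) auto
  have bound: "\<bar>indicator {0..} u * f u * u powr \<rho>\<bar> \<le> B * (indicator {0..} u * exp (- (1 * u)) * u powr \<rho>)"
    for u
  proof (cases "0 \<le> u")
    case True
    then have "\<bar>f u\<bar> * u powr \<rho> \<le> B * exp (- u) * u powr \<rho>"
      using B[of u] by (intro mult_right_mono) auto
    then show ?thesis
      using True by (simp add: abs_mult mult_ac)
  qed simp
  show int: "integrable lborel (\<lambda>u. indicator {0..} u * f u * u powr \<rho>)"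
  proof (rule Bochner_Integration.integrable_bound)
    show "integrable lborel (\<lambda>u. B * (indicator {0..} u * exp (- (1 * u)) * u powr \<rho>))"
      using major by (simp add: has_bochner_integral_iff)
    show "AE u in lborel. norm (indicator {0..} u * f u * u powr \<rho>)
        \<le> norm (B * (indicator {0..} u * exp (- (1 * u)) * u powr \<rho>))"
      by (intro AE_I2) (metis bound abs_ge_self order_trans real_norm_def)
  qed measurable
  have "\<bar>\<integral>u. indicator {0..} u * f u * u powr \<rho> \<partial>lborel\<bar> \<le> B * Gamma (1 + \<rho>)"
    using integral_abs_bound_integral[OF int integrable.intros[OF major] bound]
    by (simp only: has_bochner_integral_integral_eq[OF major])
  then have "c / Gamma (1 + \<rho>) * \<bar>\<integral>u. indicator {0..} u * f u * u powr \<rho> \<partial>lborel\<bar>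
      \<le> c / Gamma (1 + \<rho>) * (B * Gamma (1 + \<rho>))"
    using c_nonneg Gamma_pos by (intro mult_left_mono) auto
  then have "c / Gamma (1 + \<rho>) * \<bar>\<integral>u. indicator {0..} u * f u * u powr \<rho> \<partial>lborel\<bar> \<le> B * c"
    using Gamma_pos by (simp add: mult.commute)
  then show "\<bar>limit_integral f\<bar> \<le> B * c"
    using c_nonneg Gamma_pos by (simp add: limit_integral_def abs_mult)
qed

lemma scaled_integral_add:
  assumes "integrable lborel (\<lambda>t. indicator {0..} t * f (t / T) * m t)"
    and "integrable lborel (\<lambda>t. indicator {0..} t * g (t / T) * m t)"
  shows "scaled_integral (\<lambda>u. f u + g u) T = scaled_integral f T + scaled_integral g T"
proof -
  have "has_bochner_integral lborel (\<lambda>t. indicator {0..} t * (f (t / T) + g (t / T)) * m t)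
      ((\<integral>t. indicator {0..} t * f (t / T) * m t \<partial>lborel) + (\<integral>t. indicator {0..} t * g (t / T) * m t \<partial>lborel))"
    using has_bochner_integral_add[OF assms[THEN has_bochner_integral_integrable]]
    by (simp only: distrib_left distrib_right)
  then have "scaled_integral (\<lambda>u. f u + g u) T = ((\<integral>t. indicator {0..} t * f (t / T) * m t \<partial>lborel)
      + (\<integral>t. indicator {0..} t * g (t / T) * m t \<partial>lborel)) / T powr (1 + \<rho>)"
    by (rule scaled_integral_eqI)
  then show ?thesis
    by (simp add: scaled_integral_def add_divide_distrib)
qed

lemma limit_integral_add:
  assumes "integrable lborel (\<lambda>u. indicator {0..} u * f u * u powr \<rho>)"
    and "integrable lborel (\<lambda>u. indicator {0..} u * g u * u powr \<rho>)"
  shows "limit_integral (\<lambda>u. f u + g u) = limit_integral f + limit_integral g"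
proof -
  have "has_bochner_integral lborel (\<lambda>u. indicator {0..} u * (f u + g u) * u powr \<rho>)
      ((\<integral>u. indicator {0..} u * f u * u powr \<rho> \<partial>lborel) + (\<integral>u. indicator {0..} u * g u * u powr \<rho> \<partial>lborel))"
    using has_bochner_integral_add[OF assms[THEN has_bochner_integral_integrable]]
    by (simp only: distrib_left distrib_right)
  then have "limit_integral (\<lambda>u. f u + g u) = c / Gamma (1 + \<rho>) * ((\<integral>u. indicator {0..} u * f u * u powr \<rho> \<partial>lborel)
      + (\<integral>u. indicator {0..} u * g u * u powr \<rho> \<partial>lborel))"
    by (rule limit_integral_eqI)
  then show ?thesis
    by (simp add: limit_integral_def distrib_left)
qed

lemma scaled_limit_gap_perturb:
  assumes [measurable]: "w \<in> borel_measurable borel" "K \<in> borel_measurable borel"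
    and w: "\<And>u. 0 \<le> u \<Longrightarrow> \<bar>w u\<bar> \<le> B * exp (- u)"
    and close: "\<And>u. 0 \<le> u \<Longrightarrow> \<bar>w u - K u\<bar> \<le> \<eta> * exp (- u)" and T: "0 < T"
  shows "\<bar>(scaled_integral w T - limit_integral w) - (scaled_integral K T - limit_integral K)\<bar>
    \<le> \<eta> * (scaled_integral (\<lambda>u. exp (- u)) T + c)"
proof -
  define D where "D u = w u - K u" for u
  have [measurable]: "D \<in> borel_measurable borel"
    unfolding D_def by measurable
  have D: "\<bar>D u\<bar> \<le> \<eta> * exp (- u)" if "0 \<le> u" for u
    using close[OF that] by (simp add: D_def)
  have K: "\<bar>K u\<bar> \<le> (B + \<eta>) * exp (- u)" if "0 \<le> u" for u
    using w[OF that] D[OF that] abs_triangle_ineq4[of "w u" "D u"] by (simp add: D_def distrib_right)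
  have w_eq: "w = (\<lambda>u. K u + D u)"
    by (simp add: D_def)
  have "scaled_integral w T = scaled_integral K T + scaled_integral D T"
    unfolding w_eq using T
    by (intro scaled_integral_add scaled_integral_exp_dominated(1)[OF _ K]
        scaled_integral_exp_dominated(1)[OF _ D]) auto
  moreover have "limit_integral w = limit_integral K + limit_integral D"
    unfolding w_eq
    by (intro limit_integral_add limit_integral_exp_dominated(1)[OF _ K]
        limit_integral_exp_dominated(1)[OF _ D]) auto
  moreover have "\<bar>scaled_integral D T\<bar> \<le> \<eta> * scaled_integral (\<lambda>u. exp (- u)) T"
    using scaled_integral_exp_dominated(2)[OF _ D T] by simp
  moreover have "\<bar>limit_integral D\<bar> \<le> \<eta> * c"
    using limit_integral_exp_dominated(2)[OF _ D] by simp
  ultimately show ?thesis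
    using abs_triangle_ineq4[of "scaled_integral D T" "limit_integral D"] by (simp add: distrib_left)
qed

lemma scaled_integral_tendsto:
  assumes cont: "continuous_on UNIV w" and supp: "\<And>u. b \<le> u \<Longrightarrow> w u = 0"
  shows "((\<lambda>T. scaled_integral w T) \<longlongrightarrow> limit_integral w) at_top"
proof (rule tendstoI)
  fix \<epsilon> :: real
  assume "0 < \<epsilon>"
  define \<eta> where "\<eta> = \<epsilon> / (2 * c + 2)"
  have \<eta>: "0 < \<eta>"
    using \<open>0 < \<epsilon>\<close> c_nonneg by (simp add: \<eta>_def)
  obtain a n where approx:
      "\<And>u. 0 \<le> u \<Longrightarrow> \<bar>w u - (\<Sum>i\<le>n. a i * exp (- (real (Suc i) * u)))\<bar> \<le> \<eta> * exp (- u)"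
    using exp_polynomial_approximation[OF cont supp \<eta>] by blast
  define K where "K = (\<lambda>u. \<Sum>i\<le>n. a i * exp (- (real (Suc i) * u)))"
  obtain B where B: "\<And>u. 0 \<le> u \<Longrightarrow> \<bar>w u\<bar> \<le> B * exp (- u)"
    using exp_dominated_if_bounded_support[OF cont supp] by blast
  have [measurable]: "w \<in> borel_measurable borel" "K \<in> borel_measurable borel"
    using cont unfolding K_def by (auto intro: borel_measurable_continuous_onI)
  have "\<forall>\<^sub>F T in at_top. scaled_integral (\<lambda>u. exp (- u)) T < c + 1"
    using scaled_integral_exp_tendsto[of 1] by (intro order_tendstoD) auto
  moreover have "\<forall>\<^sub>F T in at_top. dist (scaled_integral K T) (limit_integral K) < \<eta>"
    using scaled_integral_exp_poly_tendsto[of a n, folded K_def] \<eta> by (rule tendstoD)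
  ultimately show "\<forall>\<^sub>F T in at_top. dist (scaled_integral w T) (limit_integral w) < \<epsilon>"
    using eventually_gt_at_top[of 0]
  proof eventually_elim
    case (elim T)
    have "\<bar>(scaled_integral w T - limit_integral w) - (scaled_integral K T - limit_integral K)\<bar>
        \<le> \<eta> * (scaled_integral (\<lambda>u. exp (- u)) T + c)"
      using approx elim(3) by (intro scaled_limit_gap_perturb[OF _ _ B]) (auto simp: K_def)
    also have "\<dots> \<le> \<eta> * (2 * c + 1)"
      using elim(1) \<eta> by (intro mult_left_mono) auto
    finally have "dist (scaled_integral w T) (limit_integral w) < \<eta> * (2 * c + 1) + \<eta>"
      using elim(2) unfolding dist_real_def by linarith
    also have "\<dots> = \<eta> * (2 * c + 2)"
      by (simp add: algebra_simps)
    also have "\<dots> = \<epsilon>"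
      using c_nonneg by (simp add: \<eta>_def)
    finally show ?case .
  qed
qed

lemma limit_integral_window_bounds:
  assumes cont: "continuous_on UNIV w" and w_nonneg: "\<And>u. 0 \<le> w u"
    and window: "\<And>u. w u \<noteq> 0 \<Longrightarrow> a < u \<and> u < b" and a: "0 \<le> a"
    and w_int: "has_bochner_integral lborel w W"
  shows "c / Gamma (1 + \<rho>) * (a powr \<rho> * W) \<le> limit_integral w"
    and "limit_integral w \<le> c / Gamma (1 + \<rho>) * (b powr \<rho> * W)"
proof -
  have [measurable]: "w \<in> borel_measurable borel"
    using cont by (rule borel_measurable_continuous_onI)
  have "w u = 0" if "b \<le> u" for u
    using window[of u] that by auto
  then obtain B where "\<And>u. 0 \<le> u \<Longrightarrow> \<bar>w u\<bar> \<le> B * exp (- u)"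
    using exp_dominated_if_bounded_support[OF cont] by blast
  then have int: "integrable lborel (\<lambda>u. indicator {0..} u * w u * u powr \<rho>)"
    by (intro limit_integral_exp_dominated(1)) auto
  have bounds: "a powr \<rho> * w u \<le> indicator {0..} u * w u * u powr \<rho> \<and>
        indicator {0..} u * w u * u powr \<rho> \<le> b powr \<rho> * w u" for u
  proof (cases "w u = 0")
    case False
    then have u: "a < u" "u < b"
      using window by auto
    then have "a powr \<rho> \<le> u powr \<rho>" "u powr \<rho> \<le> b powr \<rho>"
      using a rho by (auto intro!: powr_mono2)
    with u a w_nonneg[of u] show ?thesis
      by (simp add: mult.commute mult_left_mono)
  qed simp
  have aW: "has_bochner_integral lborel (\<lambda>u. a powr \<rho> * w u) (a powr \<rho> * W)"
    and bW: "has_bochner_integral lborel (\<lambda>u. b powr \<rho> * w u) (b powr \<rho> * W)"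
    using w_int by (auto intro!: has_bochner_integral_mult_right)
  have "(\<integral>u. a powr \<rho> * w u \<partial>lborel) \<le> (\<integral>u. indicator {0..} u * w u * u powr \<rho> \<partial>lborel)"
    using bounds by (intro integral_mono int integrable.intros[OF aW]) auto
  moreover have "(\<integral>u. indicator {0..} u * w u * u powr \<rho> \<partial>lborel) \<le> (\<integral>u. b powr \<rho> * w u \<partial>lborel)"
    using bounds by (intro integral_mono int integrable.intros[OF bW]) auto
  ultimately have "a powr \<rho> * W \<le> (\<integral>u. indicator {0..} u * w u * u powr \<rho> \<partial>lborel)"
    and "(\<integral>u. indicator {0..} u * w u * u powr \<rho> \<partial>lborel) \<le> b powr \<rho> * W"
    by (simp_all only: has_bochner_integral_integral_eq[OF aW] has_bochner_integral_integral_eq[OF bW])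
  moreover have "0 \<le> c / Gamma (1 + \<rho>)"
    using c_nonneg Gamma_pos by simp
  ultimately show "c / Gamma (1 + \<rho>) * (a powr \<rho> * W) \<le> limit_integral w"
    and "limit_integral w \<le> c / Gamma (1 + \<rho>) * (b powr \<rho> * W)"
    unfolding limit_integral_def by (simp_all only: mult_left_mono)
qed

lemma scaled_integral_window_bounds:
  assumes cont: "continuous_on UNIV w" and w_nonneg: "\<And>u. 0 \<le> w u"
    and window: "\<And>u. w u \<noteq> 0 \<Longrightarrow> a < u \<and> u < b" and a: "0 \<le> a"
    and w_int: "has_bochner_integral lborel w W" and T: "0 < T"
  shows "m (a * T) * W \<le> T powr \<rho> * scaled_integral w T"
    and "T powr \<rho> * scaled_integral w T \<le> m (b * T) * W"
proof -
  have [measurable]: "w \<in> borel_measurable borel"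
    using cont by (rule borel_measurable_continuous_onI)
  have "w u = 0" if "b \<le> u" for u
    using window[of u] that by auto
  then obtain B where "\<And>u. 0 \<le> u \<Longrightarrow> \<bar>w u\<bar> \<le> B * exp (- u)"
    using exp_dominated_if_bounded_support[OF cont] by blast
  then have int: "integrable lborel (\<lambda>t. indicator {0..} t * w (t / T) * m t)"
    using T by (intro scaled_integral_exp_dominated(1)) auto
  from has_bochner_integral_rescale[OF w_int T]
  have aW: "has_bochner_integral lborel (\<lambda>t. m (a * T) * w (t / T)) (m (a * T) * (T * W))"
    and bW: "has_bochner_integral lborel (\<lambda>t. m (b * T) * w (t / T)) (m (b * T) * (T * W))"
    using T by (auto intro!: has_bochner_integral_mult_right)
  have bounds: "m (a * T) * w (t / T) \<le> indicator {0..} t * w (t / T) * m t \<and>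
      indicator {0..} t * w (t / T) * m t \<le> m (b * T) * w (t / T)" for t
  proof (cases "w (t / T) = 0")
    case False
    then have t: "a * T < t" "t < b * T"
      using window[OF False] T by (auto simp: field_simps)
    moreover have "0 \<le> a * T"
      using a T by simp
    ultimately have "0 \<le> t" "m (a * T) \<le> m t" "m t \<le> m (b * T)"
      using monoD[OF mono] by auto
    with w_nonneg[of "t / T"] show ?thesis
      by (simp add: mult.commute[of "w (t / T)"] mult_right_mono)
  qed simp
  have "(\<integral>t. m (a * T) * w (t / T) \<partial>lborel) \<le> (\<integral>t. indicator {0..} t * w (t / T) * m t \<partial>lborel)"
    using bounds by (intro integral_mono int integrable.intros[OF aW]) auto
  moreover have "(\<integral>t. indicator {0..} t * w (t / T) * m t \<partial>lborel) \<le> (\<integral>t. m (b * T) * w (t / T) \<partial>lborel)"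
    using bounds by (intro integral_mono int integrable.intros[OF bW]) auto
  ultimately have "m (a * T) * (T * W) \<le> (\<integral>t. indicator {0..} t * w (t / T) * m t \<partial>lborel)"
    and "(\<integral>t. indicator {0..} t * w (t / T) * m t \<partial>lborel) \<le> m (b * T) * (T * W)"
    by (simp_all only: has_bochner_integral_integral_eq[OF aW] has_bochner_integral_integral_eq[OF bW])
  moreover have "T powr \<rho> * scaled_integral w T = (\<integral>t. indicator {0..} t * w (t / T) * m t \<partial>lborel) / T"
    using T by (simp add: scaled_integral_def powr_add)
  ultimately show "m (a * T) * W \<le> T powr \<rho> * scaled_integral w T"
    and "T powr \<rho> * scaled_integral w T \<le> m (b * T) * W"
    using T by (simp_all add: pos_le_divide_eq pos_divide_le_eq mult_ac)
qed

lemma bump_average: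
  assumes a: "0 \<le> a" and ab: "a < b"
  obtains A :: "real \<Rightarrow> real" and l :: real
  where "(A \<longlongrightarrow> l) at_top"
    and "\<And>T. 0 < T \<Longrightarrow> m (a * T) / T powr \<rho> \<le> A T"
    and "\<And>T. 0 < T \<Longrightarrow> A T \<le> m (b * T) / T powr \<rho>"
    and "c / Gamma (1 + \<rho>) * a powr \<rho> \<le> l"
    and "l \<le> c / Gamma (1 + \<rho>) * b powr \<rho>"
proof -
  obtain w :: "real \<Rightarrow> real" where cont: "continuous_on UNIV w" and w_nonneg: "\<And>u. 0 \<le> w u"
    and window: "\<And>u. w u \<noteq> 0 \<Longrightarrow> a < u \<and> u < b"
    and int: "integrable lborel w" and "0 < integral\<^sup>L lborel w"
    using bump_function_exists[OF ab] by blast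
  define W where "W = integral\<^sup>L lborel w"
  have W: "0 < W" and w_int: "has_bochner_integral lborel w W"
    using \<open>0 < integral\<^sup>L lborel w\<close> int by (simp_all add: W_def has_bochner_integral_iff)
  show ?thesis
  proof
    show "((\<lambda>T. scaled_integral w T / W) \<longlongrightarrow> limit_integral w / W) at_top"
    proof (intro tendsto_divide tendsto_const scaled_integral_tendsto[OF cont])
      show "w u = 0" if "b \<le> u" for u
        using window[of u] that by auto
    qed (use W in auto)
    show "m (a * T) / T powr \<rho> \<le> scaled_integral w T / W" if "0 < T" for T
      using scaled_integral_window_bounds(1)[of w a b W T] cont w_nonneg window a w_int W that
      by (simp add: field_simps)
    show "scaled_integral w T / W \<le> m (b * T) / T powr \<rho>" if "0 < T" for T
      using scaled_integral_window_bounds(2)[of w a b W T] cont w_nonneg window a w_int W that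
      by (simp add: field_simps)
    show "c / Gamma (1 + \<rho>) * a powr \<rho> \<le> limit_integral w / W"
      using limit_integral_window_bounds(1)[of w a b W] cont w_nonneg window a w_int W
      by (simp add: field_simps)
    show "limit_integral w / W \<le> c / Gamma (1 + \<rho>) * b powr \<rho>"
      using limit_integral_window_bounds(2)[of w a b W] cont w_nonneg window a w_int W
      by (simp add: field_simps)
  qed
qed

lemma eventually_greater_normalized:
  assumes y: "y < c / Gamma (1 + \<rho>)"
  shows "\<forall>\<^sub>F T in at_top. y < m T / T powr \<rho>"
proof -
  have "((\<lambda>\<delta>. c / Gamma (1 + \<rho>) * (1 - \<delta>) powr \<rho>) \<longlongrightarrow> c / Gamma (1 + \<rho>) * (1 - 0) powr \<rho>) (at_right 0)"
    by (intro tendsto_intros) auto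
  then have "\<forall>\<^sub>F \<delta> in at_right 0. y < c / Gamma (1 + \<rho>) * (1 - \<delta>) powr \<rho>"
    using y by (intro order_tendstoD(1)) auto
  then obtain d where d: "0 < d" "\<And>\<delta>. 0 < \<delta> \<Longrightarrow> \<delta> < d \<Longrightarrow> y < c / Gamma (1 + \<rho>) * (1 - \<delta>) powr \<rho>"
    unfolding eventually_at_right_field by auto
  define \<delta> where "\<delta> = min d 1 / 2"
  have \<delta>: "0 < \<delta>" "\<delta> < 1" "y < c / Gamma (1 + \<rho>) * (1 - \<delta>) powr \<rho>"
    using d by (auto simp: \<delta>_def)
  have "0 \<le> 1 - \<delta>" "1 - \<delta> < 1"
    using \<delta> by auto
  then obtain A l where lim: "(A \<longlongrightarrow> l) at_top"
    and "\<And>T. 0 < T \<Longrightarrow> m ((1 - \<delta>) * T) / T powr \<rho> \<le> A T"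
    and upper: "\<And>T. 0 < T \<Longrightarrow> A T \<le> m (1 * T) / T powr \<rho>"
    and l: "c / Gamma (1 + \<rho>) * (1 - \<delta>) powr \<rho> \<le> l"
    and "l \<le> c / Gamma (1 + \<rho>) * 1 powr \<rho>"
    using bump_average by blast
  have "\<forall>\<^sub>F T in at_top. y < A T"
    using \<delta>(3) l by (intro order_tendstoD(1)[OF lim]) linarith
  then show ?thesis
    using eventually_gt_at_top[of 0] by eventually_elim (use upper in fastforce)
qed

lemma eventually_less_normalized:
  assumes y: "c / Gamma (1 + \<rho>) < y"
  shows "\<forall>\<^sub>F T in at_top. m T / T powr \<rho> < y"
proof -
  have "((\<lambda>\<delta>. c / Gamma (1 + \<rho>) * (1 + \<delta>) powr \<rho>) \<longlongrightarrow> c / Gamma (1 + \<rho>) * (1 + 0) powr \<rho>) (at_right 0)"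
    by (intro tendsto_intros) auto
  then have "\<forall>\<^sub>F \<delta> in at_right 0. c / Gamma (1 + \<rho>) * (1 + \<delta>) powr \<rho> < y"
    using y by (intro order_tendstoD(2)) auto
  then obtain d where d: "0 < d" "\<And>\<delta>. 0 < \<delta> \<Longrightarrow> \<delta> < d \<Longrightarrow> c / Gamma (1 + \<rho>) * (1 + \<delta>) powr \<rho> < y"
    unfolding eventually_at_right_field by auto
  define \<delta> where "\<delta> = d / 2"
  have \<delta>: "0 < \<delta>" "c / Gamma (1 + \<rho>) * (1 + \<delta>) powr \<rho> < y"
    using d by (auto simp: \<delta>_def)
  have "0 \<le> (1::real)" "1 < 1 + \<delta>"
    using \<delta> by auto
  then obtain A l where lim: "(A \<longlongrightarrow> l) at_top"
    and lower: "\<And>T. 0 < T \<Longrightarrow> m (1 * T) / T powr \<rho> \<le> A T"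
    and "\<And>T. 0 < T \<Longrightarrow> A T \<le> m ((1 + \<delta>) * T) / T powr \<rho>"
    and "c / Gamma (1 + \<rho>) * 1 powr \<rho> \<le> l"
    and l: "l \<le> c / Gamma (1 + \<rho>) * (1 + \<delta>) powr \<rho>"
    using bump_average by blast
  have "\<forall>\<^sub>F T in at_top. A T < y"
    using \<delta>(2) l by (intro order_tendstoD(2)[OF lim]) linarith
  then show ?thesis
    using eventually_gt_at_top[of 0] by eventually_elim (use lower in fastforce)
qed

theorem tendsto_normalized: "((\<lambda>T. m T / T powr \<rho>) \<longlongrightarrow> c / Gamma (1 + \<rho>)) at_top"
  by (rule order_tendstoI[OF eventually_greater_normalized eventually_less_normalized])

end

section \<open>Moments of an inverse subordinator\<close>

definition rat_grid :: "nat \<Rightarrow> nat \<Rightarrow> real" where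
  "rat_grid i j = real i / real (Suc j)"

lemma rat_grid_nonneg: "0 \<le> rat_grid i j"
  by (simp add: rat_grid_def)

lemma rat_grid_dense:
  assumes "0 \<le> u" "u < a"
  shows "\<exists>i j. u < rat_grid i j \<and> rat_grid i j < a"
proof -
  obtain r where r: "r \<in> \<rat>" "u < r" "r < a"
    using Rats_dense_in_real[OF assms(2)] by blast
  then obtain i j where "j \<noteq> 0" "\<bar>r\<bar> = real i / real j"
    by (elim Rats_abs_nat_div_natE)
  then have "r = rat_grid i (j - 1)"
    using r assms(1) by (simp add: rat_grid_def)
  then show ?thesis
    using r by blast
qed

lemma nn_integral_exp_tail:
  fixes s b :: real
  assumes "0 < s"
  shows "(\<integral>\<^sup>+t. ennreal (exp (- (s * t))) * indicator {b..} t \<partial>lborel) = ennreal (exp (- (s * b)) / s)"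
  using nn_integral_has_integral_lebesgue'[OF _ has_integral_exp_minus_to_infinity[OF assms]] by simp

lemma nn_integral_power_exp:
  fixes a :: real
  assumes "0 < a"
  shows "(\<integral>\<^sup>+x. ennreal (x ^ k * exp (- (a * x))) * indicator {0..} x \<partial>lborel) = ennreal (fact k / a ^ Suc k)"
proof -
  have "(\<integral>\<^sup>+x. ennreal (x ^ k * exp (- (a * x))) * indicator {0..} x \<partial>lborel)
      = ennreal \<bar>1 / a\<bar> * (\<integral>\<^sup>+x. ennreal ((0 + 1 / a * x) ^ k * exp (- (a * (0 + 1 / a * x))))
          * indicator {0..} (0 + 1 / a * x) \<partial>lborel)"
    using nn_integral_real_affine[of "\<lambda>x. ennreal (x ^ k * exp (- (a * x))) * indicator {0..} x" "1 / a" 0]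
      assms by simp
  also have "(\<integral>\<^sup>+x. ennreal ((0 + 1 / a * x) ^ k * exp (- (a * (0 + 1 / a * x))))
      * indicator {0..} (0 + 1 / a * x) \<partial>lborel)
      = (\<integral>\<^sup>+x. ennreal (1 / a ^ k) * (ennreal (x ^ k * exp (- x)) * indicator {0..} x) \<partial>lborel)"
    using assms by (intro nn_integral_cong)
      (auto simp: indicator_def zero_le_mult_iff ennreal_mult'[symmetric] power_divide field_simps)
  also have "\<dots> = ennreal (1 / a ^ k) * real_of_nat (fact k)"
    by (subst nn_integral_cmult) (auto simp: nn_intergal_power_times_exp_Ici)
  finally show ?thesis
    using assms by (simp add: ennreal_mult'[symmetric] ennreal_of_nat_eq_real_of_nat field_simps)
qed

lemma nn_integral_power_Ico:
  fixes y :: real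
  assumes "0 \<le> y"
  shows "(\<integral>\<^sup>+x. ennreal (if 0 \<le> x \<and> x < y then real (Suc k) * x ^ k else 0) \<partial>lborel) = ennreal (y ^ Suc k)"
proof -
  have int: "integrable lborel (\<lambda>x. real (Suc k) * x ^ k * indicator {0..y} x)"
    by (intro borel_integrable_atLeastAtMost) auto
  have "(\<integral>\<^sup>+x. ennreal (if 0 \<le> x \<and> x < y then real (Suc k) * x ^ k else 0) \<partial>lborel)
      = (\<integral>\<^sup>+x. ennreal (real (Suc k) * x ^ k * indicator {0..y} x) \<partial>lborel)"
    by (intro nn_integral_cong_AE)
      (use AE_lborel_singleton[of y] in \<open>eventually_elim, auto simp: indicator_def\<close>)
  also have "\<dots> = ennreal (\<integral>x. real (Suc k) * x ^ k * indicator {0..y} x \<partial>lborel)"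
    by (intro nn_integral_eq_integral int AE_I2) (auto simp: indicator_def)
  also have "(\<integral>x. real (Suc k) * x ^ k * indicator {0..y} x \<partial>lborel)
      = real (Suc k) * (\<integral>x. x ^ k * indicator {0..y} x \<partial>lborel)"
    by (simp add: mult.assoc)
  also have "\<dots> = y ^ Suc k"
    using assms by (subst integral_power) (auto simp del: of_nat_Suc)
  finally show ?thesis .
qed

text \<open>Only the one-dimensional Laplace transforms of the subordinator enter the argument.\<close>

locale laplace_subordinator = prob_space M for M :: "'a measure" +
  fixes L :: "real \<Rightarrow> 'a \<Rightarrow> real" and \<phi> :: "real \<Rightarrow> real"
  assumes measurable_L: "\<And>t. 0 \<le> t \<Longrightarrow> L t \<in> borel_measurable M"
    and L_0: "\<And>\<omega>. \<omega> \<in> space M \<Longrightarrow> L 0 \<omega> = 0"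
    and mono_on_L: "\<And>\<omega>. \<omega> \<in> space M \<Longrightarrow> mono_on {0..} (\<lambda>t. L t \<omega>)"
    and laplace: "\<And>t u. 0 \<le> t \<Longrightarrow> 0 \<le> u \<Longrightarrow> expectation (\<lambda>\<omega>. exp (- u * L t \<omega>)) = exp (- t * \<phi> u)"
    and \<phi>_pos: "\<And>u. 0 < u \<Longrightarrow> 0 < \<phi> u"
begin

lemma measurable_L_rat_grid [measurable]: "L (rat_grid i j) \<in> borel_measurable M"
  using measurable_L rat_grid_nonneg by auto

lemma measurable_L_nat [measurable]: "L (real k) \<in> borel_measurable M"
  using measurable_L by auto

lemma L_mono: "\<omega> \<in> space M \<Longrightarrow> 0 \<le> x \<Longrightarrow> x \<le> y \<Longrightarrow> L x \<omega> \<le> L y \<omega>"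
  using mono_on_L by (auto simp: mono_on_def)

lemma L_nonneg: "\<omega> \<in> space M \<Longrightarrow> 0 \<le> x \<Longrightarrow> 0 \<le> L x \<omega>"
  using L_mono[of \<omega> 0 x] L_0 by auto

lemma bdd_below_hitting_times: "bdd_below {u. 0 \<le> u \<and> t < L u \<omega>}"
  by (auto intro: bdd_belowI[of _ 0])

lemma hitting_times_nonempty_iff:
  assumes "\<omega> \<in> space M"
  shows "{u. 0 \<le> u \<and> t < L u \<omega>} \<noteq> {} \<longleftrightarrow> (\<exists>i j. t < L (rat_grid i j) \<omega>)"
proof
  assume "{u. 0 \<le> u \<and> t < L u \<omega>} \<noteq> {}"
  then obtain u where u: "0 \<le> u" "t < L u \<omega>"
    by auto
  obtain i j where "u < rat_grid i j"
    using rat_grid_dense[OF u(1), of "u + 1"] by auto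
  then have "t < L (rat_grid i j) \<omega>"
    using L_mono[OF assms u(1), of "rat_grid i j"] u by simp
  then show "\<exists>i j. t < L (rat_grid i j) \<omega>"
    by blast
qed (use rat_grid_nonneg in auto)

lemma inverse_subordinator_less_iff:
  assumes "\<omega> \<in> space M" "{u. 0 \<le> u \<and> t < L u \<omega>} \<noteq> {}"
  shows "inverse_subordinator L t \<omega> < a \<longleftrightarrow> (\<exists>i j. rat_grid i j < a \<and> t < L (rat_grid i j) \<omega>)"
proof
  assume "inverse_subordinator L t \<omega> < a"
  then obtain u where u: "0 \<le> u" "t < L u \<omega>" "u < a"
    using cInf_less_iff[OF assms(2) bdd_below_hitting_times] by (auto simp: inverse_subordinator_def)
  obtain i j where ij: "u < rat_grid i j" "rat_grid i j < a"
    using rat_grid_dense[OF u(1) u(3)] by auto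
  moreover have "t < L (rat_grid i j) \<omega>"
    using L_mono[OF assms(1) u(1), of "rat_grid i j"] u ij by simp
  ultimately show "\<exists>i j. rat_grid i j < a \<and> t < L (rat_grid i j) \<omega>"
    by blast
next
  assume "\<exists>i j. rat_grid i j < a \<and> t < L (rat_grid i j) \<omega>"
  then obtain i j where ij: "rat_grid i j < a" "t < L (rat_grid i j) \<omega>"
    by blast
  then have "inverse_subordinator L t \<omega> \<le> rat_grid i j"
    unfolding inverse_subordinator_def using rat_grid_nonneg
    by (intro cInf_lower bdd_below_hitting_times) auto
  then show "inverse_subordinator L t \<omega> < a"
    using ij by linarith
qed

lemma measurable_inverse_subordinator: "inverse_subordinator L t \<in> borel_measurable M"
proof (subst borel_measurable_iff_less, intro allI)
  fix a :: real
  have "{\<omega> \<in> space M. inverse_subordinator L t \<omega> < a}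
     = {\<omega> \<in> space M. ((\<exists>i j. t < L (rat_grid i j) \<omega>) \<and> (\<exists>i j. rat_grid i j < a \<and> t < L (rat_grid i j) \<omega>))
          \<or> (\<not> (\<exists>i j. t < L (rat_grid i j) \<omega>) \<and> Inf {} < a)}"
  proof (intro Collect_cong conj_cong refl)
    fix \<omega>
    assume \<omega>: "\<omega> \<in> space M"
    show "inverse_subordinator L t \<omega> < a \<longleftrightarrow>
        ((\<exists>i j. t < L (rat_grid i j) \<omega>) \<and> (\<exists>i j. rat_grid i j < a \<and> t < L (rat_grid i j) \<omega>))
          \<or> (\<not> (\<exists>i j. t < L (rat_grid i j) \<omega>) \<and> Inf {} < a)"
    proof (cases "{u. 0 \<le> u \<and> t < L u \<omega>} = {}")
      case True
      then show ?thesis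
        using hitting_times_nonempty_iff[OF \<omega>, of t] unfolding inverse_subordinator_def True by simp
    next
      case False
      then show ?thesis
        using hitting_times_nonempty_iff[OF \<omega>, of t] inverse_subordinator_less_iff[OF \<omega> False] by auto
    qed
  qed
  also have "\<dots> \<in> sets M"
    by measurable
  finally show "{\<omega> \<in> space M. inverse_subordinator L t \<omega> < a} \<in> sets M" .
qed

definition unbounded :: "'a set" where
  "unbounded = {\<omega> \<in> space M. \<forall>n::nat. \<exists>k::nat. real n < L (real k) \<omega>}"

text \<open>On bounded paths \<open>inverse_subordinator L t\<close> may be \<open>Inf {}\<close>, an unspecified real number.
  \<open>Y\<close> agrees with it almost surely but is \<open>0\<close> there.\<close>

definition Y :: "real \<Rightarrow> 'a \<Rightarrow> real" where
  "Y t \<omega> = (if \<omega> \<in> unbounded then inverse_subordinator L t \<omega> else 0)"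

lemma sets_unbounded [measurable]: "unbounded \<in> sets M"
  unfolding unbounded_def by measurable

lemma hitting_times_nonempty:
  assumes "\<omega> \<in> unbounded"
  shows "{u. 0 \<le> u \<and> t < L u \<omega>} \<noteq> {}"
proof -
  obtain n :: nat where n: "max t 0 \<le> real n"
    using real_arch_simple by blast
  obtain k :: nat where "real n < L (real k) \<omega>"
    using assms unfolding unbounded_def by blast
  then have "real k \<in> {u. 0 \<le> u \<and> t < L u \<omega>}"
    using n by auto
  then show ?thesis
    by blast
qed

lemma Y_nonneg: "0 \<le> Y t \<omega>"
  using hitting_times_nonempty
  by (auto simp: Y_def inverse_subordinator_def intro!: cInf_greatest)

lemma L_le_if_less_Y:
  assumes "\<omega> \<in> space M" "0 \<le> x" "x < Y t \<omega>"
  shows "L x \<omega> \<le> t"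
proof (rule ccontr)
  assume "\<not> L x \<omega> \<le> t"
  then have "inverse_subordinator L t \<omega> \<le> x"
    unfolding inverse_subordinator_def using assms(2) by (intro cInf_lower bdd_below_hitting_times) auto
  then show False
    using assms by (auto simp: Y_def split: if_splits)
qed

lemma less_Y_if_L_le:
  assumes "\<omega> \<in> unbounded" "0 \<le> x" "0 < \<eta>" "L (x + \<eta>) \<omega> \<le> t"
  shows "x < Y t \<omega>"
proof -
  have "\<omega> \<in> space M"
    using assms(1) by (simp add: unbounded_def)
  then have "x + \<eta> \<le> u" if "0 \<le> u" "t < L u \<omega>" for u
    using L_mono[of \<omega> u "x + \<eta>"] that assms by force
  then have "x + \<eta> \<le> inverse_subordinator L t \<omega>"
    unfolding inverse_subordinator_def using hitting_times_nonempty[OF assms(1)]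
    by (intro cInf_greatest) auto
  then show ?thesis
    using assms by (simp add: Y_def)
qed

lemma Y_mono:
  assumes "t \<le> t'"
  shows "Y t \<omega> \<le> Y t' \<omega>"
proof (cases "\<omega> \<in> unbounded")
  case True
  have "{u. 0 \<le> u \<and> t' < L u \<omega>} \<subseteq> {u. 0 \<le> u \<and> t < L u \<omega>}"
    using assms by auto
  then show ?thesis
    using hitting_times_nonempty[OF True, of t'] True
    by (auto simp: Y_def inverse_subordinator_def intro!: cInf_superset_mono bdd_below_hitting_times)
qed (simp add: Y_def)

lemma measurable_Y_pair [measurable]: "(\<lambda>p. Y (fst p) (snd p)) \<in> borel_measurable (lborel \<Otimes>\<^sub>M M)"
proof (subst borel_measurable_iff_less, intro allI)
  fix a :: real
  have "{p \<in> space (lborel \<Otimes>\<^sub>M M). Y (fst p) (snd p) < a}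
     = {p \<in> space (lborel \<Otimes>\<^sub>M M). (snd p \<in> unbounded \<and> (\<exists>i j. rat_grid i j < a \<and> fst p < L (rat_grid i j) (snd p)))
          \<or> (snd p \<notin> unbounded \<and> 0 < a)}"
    using inverse_subordinator_less_iff[OF _ hitting_times_nonempty]
    by (auto simp: Y_def space_pair_measure unbounded_def)
  also have "\<dots> \<in> sets (lborel \<Otimes>\<^sub>M M)"
    by measurable
  finally show "{p \<in> space (lborel \<Otimes>\<^sub>M M). Y (fst p) (snd p) < a} \<in> sets (lborel \<Otimes>\<^sub>M M)" .
qed

lemma measurable_Y [measurable]: "Y t \<in> borel_measurable M"
proof -
  have "(\<lambda>\<omega>. Y (fst (t, \<omega>)) (snd (t, \<omega>))) \<in> borel_measurable M"
    by measurable
  then show ?thesis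
    by simp
qed

lemma nn_integral_laplace:
  assumes "0 \<le> x" "0 \<le> u"
  shows "(\<integral>\<^sup>+\<omega>. ennreal (exp (- u * L x \<omega>)) \<partial>M) = ennreal (exp (- x * \<phi> u))"
proof -
  have int: "integrable M (\<lambda>\<omega>. exp (- u * L x \<omega>))"
  proof (rule Bochner_Integration.integrable_bound[of _ "\<lambda>_. 1::real"])
    show "integrable M (\<lambda>_. 1::real)" by simp
    show "(\<lambda>\<omega>. exp (- u * L x \<omega>)) \<in> borel_measurable M" using measurable_L[OF assms(1)] by measurable
    show "AE \<omega> in M. norm (exp (- u * L x \<omega>)) \<le> norm (1::real)"
      using L_nonneg assms by (intro AE_I2) (auto simp: mult_nonneg_nonneg)
  qed
  show ?thesis using laplace[OF assms] by (subst nn_integral_eq_integral[OF int]) auto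
qed

lemma emeasure_L_le:
  assumes "0 \<le> x"
  shows "emeasure M {\<omega> \<in> space M. L x \<omega> \<le> t} \<le> ennreal (exp t * exp (- x * \<phi> 1))"
proof -
  have "emeasure M {\<omega> \<in> space M. L x \<omega> \<le> t} = (\<integral>\<^sup>+\<omega>. indicator {\<omega> \<in> space M. L x \<omega> \<le> t} \<omega> \<partial>M)"
    using measurable_L[OF assms] by (intro nn_integral_indicator[symmetric]) measurable
  also have "\<dots> \<le> (\<integral>\<^sup>+\<omega>. ennreal (exp t) * ennreal (exp (- 1 * L x \<omega>)) \<partial>M)"
  proof (intro nn_integral_mono)
    fix \<omega> assume "\<omega> \<in> space M"
    show "indicator {\<omega> \<in> space M. L x \<omega> \<le> t} \<omega> \<le> ennreal (exp t) * ennreal (exp (- 1 * L x \<omega>))"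
    proof (cases "L x \<omega> \<le> t")
      case True
      then have "1 \<le> exp t * exp (- 1 * L x \<omega>)" by (simp add: exp_minus field_simps)
      then show ?thesis by (simp add: ennreal_mult'[symmetric] indicator_def)
    qed (simp add: indicator_def)
  qed
  also have "\<dots> = ennreal (exp t) * ennreal (exp (- x * \<phi> 1))"
  proof -
    have l1: "(\<integral>\<^sup>+\<omega>. ennreal (exp (- L x \<omega>)) \<partial>M) = ennreal (exp (- (x * \<phi> 1)))"
      using nn_integral_laplace[OF assms, of 1] by simp
    show ?thesis using measurable_L[OF assms] by (subst nn_integral_cmult) (auto simp: l1)
  qed
  finally show ?thesis by (simp add: ennreal_mult'[symmetric])
qed

lemma null_sets_bounded_paths: "{\<omega> \<in> space M. \<forall>k::nat. L (real k) \<omega> \<le> r} \<in> null_sets M"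
proof -
  define N where "N = {\<omega> \<in> space M. \<forall>k::nat. L (real k) \<omega> \<le> r}"
  have "N \<in> sets M"
    unfolding N_def by measurable
  have bound: "measure M N \<le> exp r * exp (- real k * \<phi> 1)" for k :: nat
  proof -
    have "emeasure M N \<le> emeasure M {\<omega> \<in> space M. L (real k) \<omega> \<le> r}"
      by (intro emeasure_mono) (auto simp: N_def)
    also have "\<dots> \<le> ennreal (exp r * exp (- real k * \<phi> 1))"
      by (rule emeasure_L_le) simp
    finally show ?thesis
      by (simp add: emeasure_eq_measure)
  qed
  have "filterlim (\<lambda>k::nat. real k * \<phi> 1) at_top sequentially"
    using \<phi>_pos[of 1] by (intro filterlim_at_top_mult_tendsto_pos[OF tendsto_const _ filterlim_real_sequentially]) auto
  then have "(\<lambda>k::nat. exp (- real k * \<phi> 1)) \<longlonglongrightarrow> 0"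
    by (simp add: filterlim_compose[OF exp_at_bot] filterlim_uminus_at_top)
  then have lim: "(\<lambda>k::nat. exp r * exp (- real k * \<phi> 1)) \<longlonglongrightarrow> exp r * 0"
    by (intro tendsto_mult tendsto_const)
  have "measure M N \<le> exp r * 0"
    by (rule tendsto_lowerbound[OF lim]) (use bound in \<open>auto intro: always_eventually\<close>)
  then have "measure M N = 0"
    using measure_nonneg[of M N] by linarith
  then show ?thesis
    using \<open>N \<in> sets M\<close> by (simp add: N_def null_sets_def emeasure_eq_measure)
qed

lemma AE_unbounded: "AE \<omega> in M. \<omega> \<in> unbounded"
proof (rule AE_I')
  show "(\<Union>n::nat. {\<omega> \<in> space M. \<forall>k::nat. L (real k) \<omega> \<le> real n}) \<in> null_sets M"
    using null_sets_bounded_paths by blast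
qed (auto simp: unbounded_def not_less)

lemma pair_sigma_finite_lborel: "pair_sigma_finite lborel M"
  by (intro pair_sigma_finite.intro lborel.sigma_finite_measure_axioms) unfold_locales

lemma laplace_cdf:
  assumes x: "0 \<le> x" and s: "0 < s"
  shows "(\<integral>\<^sup>+t. ennreal (indicator {0..} t * exp (- (s * t))) * emeasure M {\<omega> \<in> space M. L x \<omega> \<le> t} \<partial>lborel)
     = ennreal (exp (- x * \<phi> s) / s)"
proof -
  interpret P: pair_sigma_finite lborel M by (rule pair_sigma_finite_lborel)
  note [measurable] = measurable_L[OF x]
  have "(\<integral>\<^sup>+t. ennreal (indicator {0..} t * exp (- (s * t))) * emeasure M {\<omega> \<in> space M. L x \<omega> \<le> t} \<partial>lborel)
     = (\<integral>\<^sup>+t. (\<integral>\<^sup>+\<omega>. ennreal (if L x \<omega> \<le> t then indicator {0..} t * exp (- (s * t)) else 0) \<partial>M) \<partial>lborel)"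
  proof (intro nn_integral_cong)
    fix t :: real
    have "emeasure M {\<omega> \<in> space M. L x \<omega> \<le> t} = (\<integral>\<^sup>+\<omega>. indicator {\<omega> \<in> space M. L x \<omega> \<le> t} \<omega> \<partial>M)"
      by (intro nn_integral_indicator[symmetric]) measurable
    then have "ennreal (indicator {0..} t * exp (- (s * t))) * emeasure M {\<omega> \<in> space M. L x \<omega> \<le> t}
        = (\<integral>\<^sup>+\<omega>. ennreal (indicator {0..} t * exp (- (s * t))) * indicator {\<omega> \<in> space M. L x \<omega> \<le> t} \<omega> \<partial>M)"
      by (simp add: nn_integral_cmult)
    also have "\<dots> = (\<integral>\<^sup>+\<omega>. ennreal (if L x \<omega> \<le> t then indicator {0..} t * exp (- (s * t)) else 0) \<partial>M)"
      by (intro nn_integral_cong) (auto simp: indicator_def)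
    finally show "ennreal (indicator {0..} t * exp (- (s * t))) * emeasure M {\<omega> \<in> space M. L x \<omega> \<le> t}
        = (\<integral>\<^sup>+\<omega>. ennreal (if L x \<omega> \<le> t then indicator {0..} t * exp (- (s * t)) else 0) \<partial>M)" .
  qed
  also have "\<dots> = (\<integral>\<^sup>+\<omega>. (\<integral>\<^sup>+t. ennreal (if L x \<omega> \<le> t then indicator {0..} t * exp (- (s * t)) else 0) \<partial>lborel) \<partial>M)"
    by (intro P.Fubini'[symmetric]) measurable
  also have "\<dots> = (\<integral>\<^sup>+\<omega>. ennreal (1 / s) * ennreal (exp (- s * L x \<omega>)) \<partial>M)"
  proof (intro nn_integral_cong)
    fix \<omega> assume \<omega>: "\<omega> \<in> space M"
    have "(\<integral>\<^sup>+t. ennreal (if L x \<omega> \<le> t then indicator {0..} t * exp (- (s * t)) else 0) \<partial>lborel)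
        = (\<integral>\<^sup>+t. ennreal (exp (- (s * t))) * indicator {L x \<omega>..} t \<partial>lborel)"
      using L_nonneg[OF \<omega> x] by (intro nn_integral_cong) (auto simp: indicator_def)
    also have "\<dots> = ennreal (exp (- (s * L x \<omega>)) / s)" by (rule nn_integral_exp_tail[OF s])
    finally show "(\<integral>\<^sup>+t. ennreal (if L x \<omega> \<le> t then indicator {0..} t * exp (- (s * t)) else 0) \<partial>lborel)
        = ennreal (1 / s) * ennreal (exp (- s * L x \<omega>))"
      using s by (simp add: ennreal_mult'[symmetric])
  qed
  also have "\<dots> = ennreal (1 / s) * ennreal (exp (- x * \<phi> s))"
    using nn_integral_laplace[OF x, of s] s by (subst nn_integral_cmult) auto
  finally show ?thesis using s by (simp add: ennreal_mult'[symmetric])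
qed

lemma emeasure_less_Y_le:
  assumes "0 \<le> x"
  shows "emeasure M {\<omega> \<in> space M. x < Y t \<omega>} \<le> emeasure M {\<omega> \<in> space M. L x \<omega> \<le> t}"
  using L_le_if_less_Y assms measurable_L[OF assms] by (intro emeasure_mono) auto

lemma emeasure_less_Y_ge:
  assumes "0 \<le> x" "0 < \<eta>"
  shows "emeasure M {\<omega> \<in> space M. L (x + \<eta>) \<omega> \<le> t} \<le> emeasure M {\<omega> \<in> space M. x < Y t \<omega>}"
proof (rule emeasure_mono_AE)
  show "AE \<omega> in M. \<omega> \<in> {\<omega> \<in> space M. L (x + \<eta>) \<omega> \<le> t} \<longrightarrow> \<omega> \<in> {\<omega> \<in> space M. x < Y t \<omega>}"
    using AE_unbounded by eventually_elim (use less_Y_if_L_le assms in auto)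
  show "{\<omega> \<in> space M. x < Y t \<omega>} \<in> sets M" by measurable
qed

lemma nn_moment_layer_cake:
  "(\<integral>\<^sup>+\<omega>. ennreal (Y t \<omega> ^ Suc k) \<partial>M)
     = (\<integral>\<^sup>+x. ennreal (real (Suc k) * x ^ k) * indicator {0..} x * emeasure M {\<omega> \<in> space M. x < Y t \<omega>} \<partial>lborel)"
proof -
  interpret P: pair_sigma_finite lborel M by (rule pair_sigma_finite_lborel)
  have "(\<integral>\<^sup>+\<omega>. ennreal (Y t \<omega> ^ Suc k) \<partial>M)
     = (\<integral>\<^sup>+\<omega>. (\<integral>\<^sup>+x. ennreal (if 0 \<le> x \<and> x < Y t \<omega> then real (Suc k) * x ^ k else 0) \<partial>lborel) \<partial>M)"
    using Y_nonneg by (intro nn_integral_cong) (simp add: nn_integral_power_Ico)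
  also have "\<dots> = (\<integral>\<^sup>+x. (\<integral>\<^sup>+\<omega>. ennreal (if 0 \<le> x \<and> x < Y t \<omega> then real (Suc k) * x ^ k else 0) \<partial>M) \<partial>lborel)"
    by (intro P.Fubini') measurable
  also have "\<dots> = (\<integral>\<^sup>+x. ennreal (real (Suc k) * x ^ k) * indicator {0..} x * emeasure M {\<omega> \<in> space M. x < Y t \<omega>} \<partial>lborel)"
  proof (intro nn_integral_cong)
    fix x :: real
    have "emeasure M {\<omega> \<in> space M. x < Y t \<omega>} = (\<integral>\<^sup>+\<omega>. indicator {\<omega> \<in> space M. x < Y t \<omega>} \<omega> \<partial>M)"
      by (intro nn_integral_indicator[symmetric]) measurable
    then have "ennreal (real (Suc k) * x ^ k) * indicator {0..} x * emeasure M {\<omega> \<in> space M. x < Y t \<omega>}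
       = (\<integral>\<^sup>+\<omega>. ennreal (real (Suc k) * x ^ k) * indicator {0..} x * indicator {\<omega> \<in> space M. x < Y t \<omega>} \<omega> \<partial>M)"
      by (simp add: nn_integral_cmult)
    also have "\<dots> = (\<integral>\<^sup>+\<omega>. ennreal (if 0 \<le> x \<and> x < Y t \<omega> then real (Suc k) * x ^ k else 0) \<partial>M)"
      by (intro nn_integral_cong) (auto simp: indicator_def)
    finally show "(\<integral>\<^sup>+\<omega>. ennreal (if 0 \<le> x \<and> x < Y t \<omega> then real (Suc k) * x ^ k else 0) \<partial>M)
        = ennreal (real (Suc k) * x ^ k) * indicator {0..} x * emeasure M {\<omega> \<in> space M. x < Y t \<omega>}" ..
  qed
  finally show ?thesis .
qed

lemma measurable_emeasure_less_Y [measurable]: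
  assumes [measurable]: "f \<in> borel_measurable N" "g \<in> borel_measurable N"
  shows "(\<lambda>p. emeasure M {\<omega> \<in> space M. f p < Y (g p) \<omega>}) \<in> borel_measurable N"
proof -
  have [measurable]: "(\<lambda>q. (g (fst q), snd q)) \<in> measurable (N \<Otimes>\<^sub>M M) (lborel \<Otimes>\<^sub>M M)"
    by measurable
  have [measurable]: "(\<lambda>q. Y (g (fst q)) (snd q)) \<in> borel_measurable (N \<Otimes>\<^sub>M M)"
    using measurable_compose[OF _ measurable_Y_pair, of "\<lambda>q. (g (fst q), snd q)"] by simp
  define Qs where "Qs = {q \<in> space (N \<Otimes>\<^sub>M M). f (fst q) < Y (g (fst q)) (snd q)}"
  have "Qs \<in> sets (N \<Otimes>\<^sub>M M)" unfolding Qs_def by measurable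
  from measurable_emeasure_Pair[OF this]
  have "(\<lambda>p. emeasure M (Pair p -` Qs)) \<in> borel_measurable N" .
  moreover have "p \<in> space N \<Longrightarrow> Pair p -` Qs = {\<omega> \<in> space M. f p < Y (g p) \<omega>}" for p
    by (auto simp: Qs_def space_pair_measure)
  ultimately show ?thesis by (subst measurable_cong[where g="\<lambda>p. emeasure M (Pair p -` Qs)"]) auto
qed

definition nn_moment :: "nat \<Rightarrow> real \<Rightarrow> ennreal" where
  "nn_moment k t = (\<integral>\<^sup>+\<omega>. ennreal (Y t \<omega> ^ Suc k) \<partial>M)"

definition tail_laplace :: "real \<Rightarrow> real \<Rightarrow> ennreal" where
  "tail_laplace s x = (\<integral>\<^sup>+t. ennreal (indicator {0..} t * exp (- (s * t))) * emeasure M {\<omega> \<in> space M. x < Y t \<omega>} \<partial>lborel)"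

lemma laplace_nn_moment_eq_tail:
  "(\<integral>\<^sup>+t. ennreal (indicator {0..} t * exp (- (s * t))) * nn_moment k t \<partial>lborel)
    = (\<integral>\<^sup>+x. ennreal (real (Suc k) * x ^ k) * indicator {0..} x * tail_laplace s x \<partial>lborel)"
proof -
  have "(\<integral>\<^sup>+t. ennreal (indicator {0..} t * exp (- (s * t))) * nn_moment k t \<partial>lborel)
     = (\<integral>\<^sup>+t. (\<integral>\<^sup>+x. ennreal (indicator {0..} t * exp (- (s * t))) * (ennreal (real (Suc k) * x ^ k) * indicator {0..} x * emeasure M {\<omega> \<in> space M. x < Y t \<omega>}) \<partial>lborel) \<partial>lborel)"
    unfolding nn_moment_def nn_moment_layer_cake by (intro nn_integral_cong) (simp add: nn_integral_cmult)
  also have "\<dots> = (\<integral>\<^sup>+x. (\<integral>\<^sup>+t. ennreal (indicator {0..} t * exp (- (s * t))) * (ennreal (real (Suc k) * x ^ k) * indicator {0..} x * emeasure M {\<omega> \<in> space M. x < Y t \<omega>}) \<partial>lborel) \<partial>lborel)"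
    by (intro lborel_pair.Fubini') measurable
  also have "\<dots> = (\<integral>\<^sup>+x. ennreal (real (Suc k) * x ^ k) * indicator {0..} x * tail_laplace s x \<partial>lborel)"
    unfolding tail_laplace_def by (intro nn_integral_cong) (simp add: nn_integral_cmult[symmetric] mult_ac)
  finally show ?thesis .
qed

lemma tail_laplace_le:
  assumes "0 \<le> x" "0 < s"
  shows "tail_laplace s x \<le> ennreal (exp (- x * \<phi> s) / s)"
proof -
  have "tail_laplace s x \<le> (\<integral>\<^sup>+t. ennreal (indicator {0..} t * exp (- (s * t))) * emeasure M {\<omega> \<in> space M. L x \<omega> \<le> t} \<partial>lborel)"
    unfolding tail_laplace_def by (intro nn_integral_mono mult_left_mono emeasure_less_Y_le assms) auto
  also have "\<dots> = ennreal (exp (- x * \<phi> s) / s)" by (rule laplace_cdf[OF assms])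
  finally show ?thesis .
qed

lemma tail_laplace_ge:
  assumes "0 \<le> x" "0 < s" "0 < \<eta>"
  shows "ennreal (exp (- (x + \<eta>) * \<phi> s) / s) \<le> tail_laplace s x"
proof -
  have "ennreal (exp (- (x + \<eta>) * \<phi> s) / s) = (\<integral>\<^sup>+t. ennreal (indicator {0..} t * exp (- (s * t))) * emeasure M {\<omega> \<in> space M. L (x + \<eta>) \<omega> \<le> t} \<partial>lborel)"
    using assms by (intro laplace_cdf[symmetric]) auto
  also have "\<dots> \<le> tail_laplace s x"
    unfolding tail_laplace_def by (intro nn_integral_mono mult_left_mono emeasure_less_Y_ge assms) auto
  finally show ?thesis .
qed

definition moment_laplace :: "nat \<Rightarrow> real \<Rightarrow> real" where
  "moment_laplace k s = fact (Suc k) / (s * \<phi> s ^ Suc k)"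

lemma moment_laplace_pos: "0 < s \<Longrightarrow> 0 < moment_laplace k s"
  using \<phi>_pos[of s] by (simp add: moment_laplace_def)

lemma nn_integral_moment_kernel:
  assumes s: "0 < s" and c: "0 \<le> c"
  shows "(\<integral>\<^sup>+x. ennreal (real (Suc k) * x ^ k) * indicator {0..} x * ennreal (c * exp (- x * \<phi> s) / s) \<partial>lborel)
     = ennreal (c * moment_laplace k s)"
proof -
  have p: "\<phi> s > 0" using \<phi>_pos[OF s] .
  have "(\<integral>\<^sup>+x. ennreal (real (Suc k) * x ^ k) * indicator {0..} x * ennreal (c * exp (- x * \<phi> s) / s) \<partial>lborel)
     = (\<integral>\<^sup>+x. ennreal (c * real (Suc k) / s) * (ennreal (x ^ k * exp (- (\<phi> s * x))) * indicator {0..} x) \<partial>lborel)"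
    using s c by (intro nn_integral_cong) (auto simp: indicator_def ennreal_mult'[symmetric] mult_ac)
  also have "\<dots> = ennreal (c * real (Suc k) / s) * ennreal (fact k / \<phi> s ^ Suc k)"
    by (subst nn_integral_cmult) (auto simp: nn_integral_power_exp[OF p])
  also have "\<dots> = ennreal (c * moment_laplace k s)"
    using s c p by (simp add: ennreal_mult'[symmetric] moment_laplace_def field_simps fact_Suc)
  finally show ?thesis .
qed

lemma laplace_nn_moment_le:
  assumes s: "0 < s"
  shows "(\<integral>\<^sup>+t. ennreal (indicator {0..} t * exp (- (s * t))) * nn_moment k t \<partial>lborel) \<le> ennreal (moment_laplace k s)"
proof -
  have "(\<integral>\<^sup>+t. ennreal (indicator {0..} t * exp (- (s * t))) * nn_moment k t \<partial>lborel)
     \<le> (\<integral>\<^sup>+x. ennreal (real (Suc k) * x ^ k) * indicator {0..} x * ennreal (1 * exp (- x * \<phi> s) / s) \<partial>lborel)"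
    unfolding laplace_nn_moment_eq_tail
  proof (intro nn_integral_mono)
    fix x :: real
    show "ennreal (real (Suc k) * x ^ k) * indicator {0..} x * tail_laplace s x \<le> ennreal (real (Suc k) * x ^ k) * indicator {0..} x * ennreal (1 * exp (- x * \<phi> s) / s)"
      using tail_laplace_le[OF _ s, of x] by (cases "0 \<le> x") (auto intro: mult_left_mono)
  qed
  also have "\<dots> = ennreal (1 * moment_laplace k s)" by (rule nn_integral_moment_kernel[OF s]) simp
  finally show ?thesis by simp
qed

lemma laplace_nn_moment_ge:
  assumes s: "0 < s" and \<eta>: "0 < \<eta>"
  shows "ennreal (exp (- \<eta> * \<phi> s) * moment_laplace k s) \<le> (\<integral>\<^sup>+t. ennreal (indicator {0..} t * exp (- (s * t))) * nn_moment k t \<partial>lborel)"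
proof -
  have "ennreal (exp (- \<eta> * \<phi> s) * moment_laplace k s)
     = (\<integral>\<^sup>+x. ennreal (real (Suc k) * x ^ k) * indicator {0..} x * ennreal (exp (- \<eta> * \<phi> s) * exp (- x * \<phi> s) / s) \<partial>lborel)"
    by (rule nn_integral_moment_kernel[OF s, symmetric]) simp
  also have "\<dots> \<le> (\<integral>\<^sup>+t. ennreal (indicator {0..} t * exp (- (s * t))) * nn_moment k t \<partial>lborel)"
    unfolding laplace_nn_moment_eq_tail
  proof (intro nn_integral_mono)
    fix x :: real
    have e: "exp (- \<eta> * \<phi> s) * exp (- x * \<phi> s) = exp (- (x + \<eta>) * \<phi> s)"
      by (simp add: exp_add[symmetric] algebra_simps)
    show "ennreal (real (Suc k) * x ^ k) * indicator {0..} x * ennreal (exp (- \<eta> * \<phi> s) * exp (- x * \<phi> s) / s)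
        \<le> ennreal (real (Suc k) * x ^ k) * indicator {0..} x * tail_laplace s x"
      unfolding e using tail_laplace_ge[OF _ s \<eta>, of x] by (cases "0 \<le> x") (auto intro: mult_left_mono)
  qed
  finally show ?thesis .
qed

lemma laplace_nn_moment:
  assumes s: "0 < s"
  shows "(\<integral>\<^sup>+t. ennreal (indicator {0..} t * exp (- (s * t))) * nn_moment k t \<partial>lborel) = ennreal (moment_laplace k s)"
proof -
  define a where "a = (\<integral>\<^sup>+t. ennreal (indicator {0..} t * exp (- (s * t))) * nn_moment k t \<partial>lborel)"
  have up: "a \<le> ennreal (moment_laplace k s)" unfolding a_def by (rule laplace_nn_moment_le[OF s])
  then have "a \<noteq> \<infinity>" by (auto simp: top_unique)
  then obtain r where r: "a = ennreal r" "0 \<le> r" by (cases a) auto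
  have rG: "r \<le> moment_laplace k s" using up r moment_laplace_pos[OF s, of k] by simp
  have low: "exp (- \<eta> * \<phi> s) * moment_laplace k s \<le> r" if "\<eta> > 0" for \<eta>
  proof -
    have "ennreal (exp (- \<eta> * \<phi> s) * moment_laplace k s) \<le> ennreal r"
      using laplace_nn_moment_ge[OF s that, of k] r by (simp add: a_def)
    then show ?thesis using r by (simp add: ennreal_le_iff)
  qed
  have "moment_laplace k s \<le> r"
  proof (rule tendsto_le[of "at_right 0" "\<lambda>_. r" r "\<lambda>\<eta>. exp (- \<eta> * \<phi> s) * moment_laplace k s"])
    show "((\<lambda>\<eta>. exp (- \<eta> * \<phi> s) * moment_laplace k s) \<longlongrightarrow> moment_laplace k s) (at_right 0)"
      by (rule tendsto_eq_intros refl | simp)+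
    show "\<forall>\<^sub>F \<eta> in at_right 0. exp (- \<eta> * \<phi> s) * moment_laplace k s \<le> r"
      using low by (auto simp: eventually_at_right_field intro: exI[of _ 1])
  qed auto
  with rG r show ?thesis by (simp add: a_def)
qed

lemma nn_moment_finite: "nn_moment k t < \<infinity>"
proof -
  have "nn_moment k t \<le> (\<integral>\<^sup>+x. ennreal (real (Suc k) * x ^ k) * indicator {0..} x * ennreal (exp t * exp (- x * \<phi> 1) / 1) \<partial>lborel)"
    unfolding nn_moment_def nn_moment_layer_cake
  proof (intro nn_integral_mono)
    fix x :: real
    show "ennreal (real (Suc k) * x ^ k) * indicator {0..} x * emeasure M {\<omega> \<in> space M. x < Y t \<omega>}
        \<le> ennreal (real (Suc k) * x ^ k) * indicator {0..} x * ennreal (exp t * exp (- x * \<phi> 1) / 1)"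
    proof (cases "0 \<le> x")
      case True
      have "emeasure M {\<omega> \<in> space M. x < Y t \<omega>} \<le> ennreal (exp t * exp (- x * \<phi> 1))"
        using emeasure_less_Y_le[OF True] emeasure_L_le[OF True] by (rule order_trans)
      then show ?thesis by (auto intro: mult_left_mono)
    qed auto
  qed
  also have "\<dots> = ennreal (exp t * moment_laplace k 1)" by (rule nn_integral_moment_kernel) auto
  finally show ?thesis by (auto simp: top_unique less_top[symmetric])
qed

definition moment :: "nat \<Rightarrow> real \<Rightarrow> real" where
  "moment k t = enn2real (nn_moment k t)"

lemma nn_moment_eq_moment: "nn_moment k t = ennreal (moment k t)"
  using nn_moment_finite[of k t] unfolding moment_def by (simp add: less_top)

lemma moment_nonneg: "0 \<le> moment k t"
  by (simp add: moment_def)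

lemma mono_moment: "mono (moment k)"
proof (rule monoI)
  fix t t' :: real assume "t \<le> t'"
  then have "nn_moment k t \<le> nn_moment k t'"
    unfolding nn_moment_def using Y_mono Y_nonneg
    by (intro nn_integral_mono ennreal_leI power_mono) auto
  then show "moment k t \<le> moment k t'" by (simp add: nn_moment_eq_moment moment_nonneg)
qed

lemma has_bochner_integral_laplace_moment:
  assumes s: "0 < s"
  shows "has_bochner_integral lborel (\<lambda>t. indicator {0..} t * exp (- (s * t)) * moment k t) (moment_laplace k s)"
proof (rule has_bochner_integral_nn_integral)
  have [measurable]: "moment k \<in> borel_measurable borel"
    by (rule borel_measurable_mono[OF mono_moment])
  show "(\<lambda>t. indicator {0..} t * exp (- (s * t)) * moment k t) \<in> borel_measurable lborel"
    by measurable
  show "(\<integral>\<^sup>+t. ennreal (indicator {0..} t * exp (- (s * t)) * moment k t) \<partial>lborel) = ennreal (moment_laplace k s)"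
    unfolding laplace_nn_moment[OF s, of k, symmetric]
    by (intro nn_integral_cong) (simp add: nn_moment_eq_moment ennreal_mult' moment_nonneg)
qed (use moment_laplace_pos[OF s, of k] moment_nonneg in auto)

lemma has_bochner_integral_moment: "has_bochner_integral M (\<lambda>\<omega>. Y t \<omega> ^ Suc k) (moment k t)"
  using Y_nonneg nn_moment_eq_moment[of k t] moment_nonneg[of k t]
  by (intro has_bochner_integral_nn_integral) (auto simp: nn_moment_def)

lemma variance_inverse_subordinator:
  "variance (inverse_subordinator L t) = moment 1 t - (moment 0 t)\<^sup>2"
proof -
  have ae: "AE \<omega> in M. inverse_subordinator L t \<omega> = Y t \<omega>"
    using AE_unbounded by eventually_elim (simp add: Y_def)
  note [measurable] = measurable_inverse_subordinator[of t]
  have "expectation (inverse_subordinator L t) = expectation (Y t)"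
    by (intro integral_cong_AE ae) measurable
  then have "variance (inverse_subordinator L t) = variance (Y t)"
    by (intro integral_cong_AE) (use ae in \<open>measurable, eventually_elim, simp\<close>)
  also have "\<dots> = expectation (\<lambda>\<omega>. (Y t \<omega>)\<^sup>2) - (expectation (Y t))\<^sup>2"
    using has_bochner_integral_moment[of t 0] has_bochner_integral_moment[of t 1]
    by (intro variance_eq) (simp_all add: has_bochner_integral_iff numeral_2_eq_2)
  also have "\<dots> = moment 1 t - (moment 0 t)\<^sup>2"
    using has_bochner_integral_moment[of t 0] has_bochner_integral_moment[of t 1]
    by (simp add: has_bochner_integral_iff numeral_2_eq_2)
  finally show ?thesis .
qed

end

section \<open>Variance asymptotics\<close>

lemma asymp_equiv_diff_square:
  fixes f g :: "real \<Rightarrow> real"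
  assumes f: "((\<lambda>t. f t / t powr (2 * a)) \<longlongrightarrow> A) at_top"
    and g: "((\<lambda>t. g t / t powr a) \<longlongrightarrow> B) at_top" and AB: "A \<noteq> B\<^sup>2"
  shows "(\<lambda>t. f t - (g t)\<^sup>2) \<sim>[at_top] (\<lambda>t. t powr (2 * a) * (A - B\<^sup>2))"
proof (rule asymp_equivI')
  have "((\<lambda>t. (f t / t powr (2 * a) - (g t / t powr a)\<^sup>2) / (A - B\<^sup>2)) \<longlongrightarrow> (A - B\<^sup>2) / (A - B\<^sup>2)) at_top"
    using AB by (intro tendsto_intros f g) auto
  moreover have "\<forall>\<^sub>F t in at_top. (f t / t powr (2 * a) - (g t / t powr a)\<^sup>2) / (A - B\<^sup>2)
      = (f t - (g t)\<^sup>2) / (t powr (2 * a) * (A - B\<^sup>2))"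
    using eventually_gt_at_top[of 0]
  proof eventually_elim
    case (elim t)
    have "t powr (2 * a) = (t powr a)\<^sup>2"
      using powr_power[of t a 2] elim by simp
    then show ?case
      using elim by (simp add: power_divide diff_divide_distrib)
  qed
  ultimately show "((\<lambda>t. (f t - (g t)\<^sup>2) / (t powr (2 * a) * (A - B\<^sup>2))) \<longlongrightarrow> 1) at_top"
    using AB by (simp add: Lim_transform_eventually)
qed

context laplace_subordinator
begin

lemma moment_laplace_asymp:
  assumes \<phi>: "((\<lambda>s. \<phi> s / s powr a) \<longlongrightarrow> C) (at_right 0)" and C: "0 < C"
  shows "((\<lambda>s. s powr (1 + real (Suc k) * a) * moment_laplace k s) \<longlongrightarrow> fact (Suc k) / C ^ Suc k) (at_right 0)"
proof -
  have "((\<lambda>s. fact (Suc k) / (\<phi> s / s powr a) ^ Suc k) \<longlongrightarrow> fact (Suc k) / C ^ Suc k) (at_right 0)"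
    using C by (intro tendsto_intros \<phi>) auto
  moreover have "\<forall>\<^sub>F s in at_right 0.
      fact (Suc k) / (\<phi> s / s powr a) ^ Suc k = s powr (1 + real (Suc k) * a) * moment_laplace k s"
  proof (rule eventually_at_rightI[of 0 1])
    fix s :: real
    assume "s \<in> {0<..<1}"
    then have s: "0 < s"
      by simp
    have "s powr (1 + real (Suc k) * a) = s * (s powr a) ^ Suc k"
      using powr_add[of s 1 "real (Suc k) * a"] powr_power[of s a "Suc k"] s by simp
    then show "fact (Suc k) / (\<phi> s / s powr a) ^ Suc k = s powr (1 + real (Suc k) * a) * moment_laplace k s"
      using s \<phi>_pos[OF s] by (simp add: moment_laplace_def power_divide)
  qed simp
  ultimately show ?thesis
    by (rule Lim_transform_eventually)
qed

lemma moment_asymp: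
  assumes "((\<lambda>s. \<phi> s / s powr a) \<longlongrightarrow> C) (at_right 0)" and "0 < C" and "0 < a"
  shows "((\<lambda>T. moment k T / T powr (real (Suc k) * a))
           \<longlongrightarrow> fact (Suc k) / C ^ Suc k / Gamma (1 + real (Suc k) * a)) at_top"
proof -
  interpret karamata_tauberian "moment k" "moment_laplace k" "real (Suc k) * a" "fact (Suc k) / C ^ Suc k"
    using assms mono_moment moment_nonneg has_bochner_integral_laplace_moment moment_laplace_asymp
    by unfold_locales auto
  show ?thesis
    by (rule tendsto_normalized)
qed

lemma variance_inverse_subordinator_asymp:
  assumes \<phi>: "((\<lambda>s. \<phi> s / s powr a) \<longlongrightarrow> C) (at_right 0)" and C: "0 < C" and a: "0 < a" "a < 1"
  shows "(\<lambda>t. variance (inverse_subordinator L t)) \<sim>[at_top]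
           (\<lambda>t. t powr (2 * a) / C\<^sup>2 * (2 / Gamma (2 * a + 1) - 1 / (Gamma (a + 1))\<^sup>2))"
proof -
  define A B where "A = 2 / C\<^sup>2 / Gamma (2 * a + 1)" and "B = 1 / C / Gamma (a + 1)"
  have AB: "A - B\<^sup>2 = (2 / Gamma (2 * a + 1) - 1 / (Gamma (a + 1))\<^sup>2) / C\<^sup>2"
    by (simp add: A_def B_def power_divide power_mult_distrib diff_divide_distrib mult.commute)
  have "(\<lambda>t. moment 1 t - (moment 0 t)\<^sup>2) \<sim>[at_top] (\<lambda>t. t powr (2 * a) * (A - B\<^sup>2))"
  proof (rule asymp_equiv_diff_square)
    show "((\<lambda>t. moment 1 t / t powr (2 * a)) \<longlongrightarrow> A) at_top"
      using moment_asymp[OF \<phi> C a(1), of 1] by (simp add: A_def numeral_2_eq_2 add.commute)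
    show "((\<lambda>t. moment 0 t / t powr a) \<longlongrightarrow> B) at_top"
      using moment_asymp[OF \<phi> C a(1), of 0] by (simp add: B_def add.commute)
    have "0 < A - B\<^sup>2"
      unfolding AB using reciprocal_Gamma_sq_less[OF a] C by simp
    then show "A \<noteq> B\<^sup>2"
      by simp
  qed
  then show ?thesis
    by (simp only: variance_inverse_subordinator AB times_divide_eq_right times_divide_eq_left)
qed

end

lemma mixed_laplace_exponent_asymp:
  assumes "0 < a2" "a2 < a1"
  shows "((\<lambda>s. mixed_laplace_exponent C1 C2 a1 a2 s / s powr a2) \<longlongrightarrow> C2) (at_right 0)"
proof -
  have "((\<lambda>s::real. C1 * s powr (a1 - a2) + C2) \<longlongrightarrow> C1 * 0 + C2) (at_right 0)"
    using assms by (intro tendsto_intros tendsto_zero_powrI[of _ _ _ "a1 - a2"] tendsto_ident_at)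
      (auto intro: eventually_at_rightI[of 0 1])
  moreover have "\<forall>\<^sub>F s in at_right 0. C1 * s powr (a1 - a2) + C2 = mixed_laplace_exponent C1 C2 a1 a2 s / s powr a2"
    by (rule eventually_at_rightI[of 0 1])
      (auto simp: mixed_laplace_exponent_def powr_diff field_simps)
  ultimately show ?thesis
    by (simp add: Lim_transform_eventually)
qed

lemma mixed_stable_laplace_subordinator:
  assumes "mixed_stable_subordinator M C1 C2 a1 a2 L" "0 \<le> C1" "0 < C2"
  shows "laplace_subordinator M L (mixed_laplace_exponent C1 C2 a1 a2)"
proof -
  note L = assms(1)[unfolded mixed_stable_subordinator_def]
  interpret prob_space M
    using L by blast
  show ?thesis
  proof
    fix t u :: real
    assume "0 \<le> t" "0 \<le> u"
    then have "expectation (\<lambda>\<omega>. exp (- u * (L t \<omega> - L 0 \<omega>))) = exp (- t * mixed_laplace_exponent C1 C2 a1 a2 u)"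
      using L by auto
    moreover have "expectation (\<lambda>\<omega>. exp (- u * (L t \<omega> - L 0 \<omega>))) = expectation (\<lambda>\<omega>. exp (- u * L t \<omega>))"
      using L by (intro Bochner_Integration.integral_cong) auto
    ultimately show "expectation (\<lambda>\<omega>. exp (- u * L t \<omega>)) = exp (- t * mixed_laplace_exponent C1 C2 a1 a2 u)"
      by simp
  qed (use L assms(2,3) in \<open>auto simp: mixed_laplace_exponent_def intro!: add_nonneg_pos\<close>)
qed

theorem mainTheorem2:
  fixes M :: "'a measure" and L :: "real \<Rightarrow> 'a \<Rightarrow> real"
    and C1 C2 \<alpha>1 \<alpha>2 :: real
  assumes "C1 \<ge> 0" and "C2 > 0" and "C1 + C2 = 1"
    and "0 < \<alpha>2" and "\<alpha>2 < \<alpha>1" and "\<alpha>1 < 1"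
    and "mixed_stable_subordinator M C1 C2 \<alpha>1 \<alpha>2 L"
  shows "(\<lambda>t. prob_space.variance M (inverse_subordinator L t)) \<sim>[at_top]
         (\<lambda>t. t powr (2 * \<alpha>2) / C2\<^sup>2 *
              (2 / Gamma (2 * \<alpha>2 + 1) - 1 / (Gamma (\<alpha>2 + 1))\<^sup>2))"
proof -
  interpret laplace_subordinator M L "mixed_laplace_exponent C1 C2 \<alpha>1 \<alpha>2"
    using mixed_stable_laplace_subordinator assms by blast
  show ?thesis
    using variance_inverse_subordinator_asymp mixed_laplace_exponent_asymp assms by simp
qed

end
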